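(* Let $A$ be an operator algebra with a left contractive approximate identity and property $(\mathcal L)$. If $\pi:A\to B(H)$ is a completely contractive homomorphism (resp. one with $\pi(A)H$ dense in $H$), then the restriction $\pi|_{\mathcal L(A)}$ is a completely contractive homomorphism (resp. one with $\pi(\mathcal L(A))H$ dense in $H$). Conversely, if $\theta:\mathcal L(A)\to B(H)$ is a completely contractive homomorphism, then there exists a completely contractive homomorphism $\pi:A\to B(H)$ extending $\theta$; if moreover $\theta(\mathcal L(A))H$ is dense in $H$, then $\pi$ is unique and $\pi(A)H$ is dense in $H$. Finally, for any completely contractive homomorphism $\pi:A\to B(H)$, $$\{T\in B(H): T\pi(A)\subset\pi(A)\}=\{T\in B(H): T\pi(\mathcal L(A))\subset\pi(\mathcal L(A))\}.$$
   Context: An operator algebra is a (complete) algebra with matrix norms completely isometrically isomorphic, via a homomorphism, to a closed subalgebra of some $B(H)$. A left contractive approximate identity is a net $\{e_\alpha\}$ in the unit ball with $e_\alpha a\to a$ for all $a$. $A$ has property $(\mathcal L)$ if it has a left contractive approximate identity $\{e_\alpha\}$ with $e_{\alpha'}e_\alpha\to e_{\alpha'}$ for each fixed $\alpha'$; then $\mathcal L(A)=\{x\in A: xe_\alpha\to x\}$, a closed left ideal of $A$ with a two-sided contractive approximate identity satisfying $\mathcal L(A)A=A$ and $A\mathcal L(A)=\mathcal L(A)$. *)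

theory Defs
  imports "HOL-Analysis.Analysis"
begin

class chilbert = real_normed_vector + complete_space +
  fixes scaleC :: "complex \<Rightarrow> 'a \<Rightarrow> 'a"
    and cinner :: "'a \<Rightarrow> 'a \<Rightarrow> complex"
  assumes scaleC_add_right: "scaleC c (x + y) = scaleC c x + scaleC c y"
    and scaleC_add_left: "scaleC (c + d) x = scaleC c x + scaleC d x"
    and scaleC_scaleC: "scaleC c (scaleC d x) = scaleC (c * d) x"
    and scaleC_one: "scaleC 1 x = x"
    and scaleC_of_real: "scaleC (complex_of_real r) x = scaleR r x"
    and cinner_commute: "cinner x y = cnj (cinner y x)"
    and cinner_add_right: "cinner x (y + z) = cinner x y + cinner x z"
    and cinner_scaleC_right: "cinner x (scaleC c y) = c * cinner x y"
    and cinner_self_real: "Im (cinner x x) = 0"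
    and cinner_self_nonneg: "0 \<le> Re (cinner x x)"
    and cinner_self_eq_0: "cinner x x = 0 \<longleftrightarrow> x = 0"
    and norm_cinner: "norm x = sqrt (Re (cinner x x))"

definition clinear_op :: "('h::chilbert \<Rightarrow> 'h) \<Rightarrow> bool" where
  "clinear_op T \<longleftrightarrow> (\<forall>x y. T (x + y) = T x + T y) \<and> (\<forall>c x. T (scaleC c x) = scaleC c (T x))"

definition bounded_op :: "('h::chilbert \<Rightarrow> 'h) \<Rightarrow> bool" where
  "bounded_op T \<longleftrightarrow> clinear_op T \<and> (\<exists>K. \<forall>x. norm (T x) \<le> K * norm x)"

definition BH :: "('h::chilbert \<Rightarrow> 'h) set" where
  "BH = {T. bounded_op T}"

definition opnorm :: "('h::chilbert \<Rightarrow> 'h) \<Rightarrow> real" where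
  "opnorm T = Sup {norm (T x) | x. norm x \<le> 1}"

text \<open>Norm of an n x n matrix of operators on H, acting on the Hilbert direct sum H^n.\<close>
definition matnorm :: "nat \<Rightarrow> (nat \<Rightarrow> nat \<Rightarrow> ('h::chilbert \<Rightarrow> 'h)) \<Rightarrow> real" where
  "matnorm n a = Sup {sqrt (\<Sum>i<n. (norm (\<Sum>j<n. a i j (x j)))\<^sup>2) | x.
                        (\<Sum>j<n. (norm (x j))\<^sup>2) \<le> 1}"

definition op_algebra :: "('h::chilbert \<Rightarrow> 'h) set \<Rightarrow> bool" where
  "op_algebra A \<longleftrightarrow> A \<subseteq> BH \<and> (\<lambda>x. 0) \<in> A
     \<and> (\<forall>S\<in>A. \<forall>T\<in>A. (\<lambda>x. S x + T x) \<in> A)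
     \<and> (\<forall>c. \<forall>T\<in>A. (\<lambda>x. scaleC c (T x)) \<in> A)
     \<and> (\<forall>S\<in>A. \<forall>T\<in>A. S \<circ> T \<in> A)
     \<and> (\<forall>T\<in>BH. (\<forall>\<epsilon>>0. \<exists>S\<in>A. opnorm (\<lambda>x. T x - S x) < \<epsilon>) \<longrightarrow> T \<in> A)"

definition cc_hom :: "('a::chilbert \<Rightarrow> 'a) set \<Rightarrow> (('a \<Rightarrow> 'a) \<Rightarrow> ('b::chilbert \<Rightarrow> 'b)) \<Rightarrow> bool" where
  "cc_hom A \<pi> \<longleftrightarrow> (\<forall>a\<in>A. \<pi> a \<in> BH)
     \<and> (\<forall>a\<in>A. \<forall>b\<in>A. \<pi> (\<lambda>x. a x + b x) = (\<lambda>y. \<pi> a y + \<pi> b y))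
     \<and> (\<forall>c. \<forall>a\<in>A. \<pi> (\<lambda>x. scaleC c (a x)) = (\<lambda>y. scaleC c (\<pi> a y)))
     \<and> (\<forall>a\<in>A. \<forall>b\<in>A. \<pi> (a \<circ> b) = \<pi> a \<circ> \<pi> b)
     \<and> (\<forall>n\<ge>1. \<forall>a. (\<forall>i<n. \<forall>j<n. a i j \<in> A) \<longrightarrow>
           matnorm n (\<lambda>i j. \<pi> (a i j)) \<le> matnorm n a)"

definition c_span :: "'h::chilbert set \<Rightarrow> 'h set" where
  "c_span S = {\<Sum>k<m. scaleC (c k) (v k) | (m::nat) c v. \<forall>k<m. v k \<in> S}"

definition nondegenerate :: "('a::chilbert \<Rightarrow> 'a) set \<Rightarrow> (('a \<Rightarrow> 'a) \<Rightarrow> ('b::chilbert \<Rightarrow> 'b)) \<Rightarrow> bool" where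
  "nondegenerate A \<pi> \<longleftrightarrow> closure (c_span {\<pi> a \<xi> | a \<xi>. a \<in> A}) = UNIV"

definition directed_set :: "('i \<Rightarrow> 'i \<Rightarrow> bool) \<Rightarrow> bool" where
  "directed_set le \<longleftrightarrow> (\<exists>i::'i. True) \<and> (\<forall>i. le i i) \<and> (\<forall>i j k. le i j \<longrightarrow> le j k \<longrightarrow> le i k)
     \<and> (\<forall>i j. \<exists>k. le i k \<and> le j k)"

definition net_filter :: "('i \<Rightarrow> 'i \<Rightarrow> bool) \<Rightarrow> 'i filter" where
  "net_filter le = (INF i. principal {j. le i j})"

definition op_net_tendsto :: "('i \<Rightarrow> 'i \<Rightarrow> bool) \<Rightarrow> ('i \<Rightarrow> ('h::chilbert \<Rightarrow> 'h)) \<Rightarrow> ('h \<Rightarrow> 'h) \<Rightarrow> bool" where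
  "op_net_tendsto le f T \<longleftrightarrow> ((\<lambda>\<alpha>. opnorm (\<lambda>x. f \<alpha> x - T x)) \<longlongrightarrow> 0) (net_filter le)"

definition left_cai :: "('h::chilbert \<Rightarrow> 'h) set \<Rightarrow> ('i \<Rightarrow> 'i \<Rightarrow> bool) \<Rightarrow> ('i \<Rightarrow> ('h \<Rightarrow> 'h)) \<Rightarrow> bool" where
  "left_cai A le e \<longleftrightarrow> directed_set le \<and> (\<forall>\<alpha>. e \<alpha> \<in> A \<and> opnorm (e \<alpha>) \<le> 1)
     \<and> (\<forall>a\<in>A. op_net_tendsto le (\<lambda>\<alpha>. e \<alpha> \<circ> a) a)"

definition property_L :: "('h::chilbert \<Rightarrow> 'h) set \<Rightarrow> ('i \<Rightarrow> 'i \<Rightarrow> bool) \<Rightarrow> ('i \<Rightarrow> ('h \<Rightarrow> 'h)) \<Rightarrow> bool" where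
  "property_L A le e \<longleftrightarrow> left_cai A le e \<and> (\<forall>\<alpha>'. op_net_tendsto le (\<lambda>\<alpha>. e \<alpha>' \<circ> e \<alpha>) (e \<alpha>'))"

definition LA :: "('h::chilbert \<Rightarrow> 'h) set \<Rightarrow> ('i \<Rightarrow> 'i \<Rightarrow> bool) \<Rightarrow> ('i \<Rightarrow> ('h \<Rightarrow> 'h)) \<Rightarrow> ('h \<Rightarrow> 'h) set" where
  "LA A le e = {x \<in> A. op_net_tendsto le (\<lambda>\<alpha>. x \<circ> e \<alpha>) x}"

end

theory Submission
  imports Defs
begin

text \<open>
  Since \<open>\<L>(A) \<subseteq> A\<close> and \<open>e\<^sub>\<alpha> a \<rightarrow> a\<close>, a cc homomorphism \<open>\<pi>\<close> of \<open>A\<close> restricts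
  to one of \<open>\<L>(A)\<close>, and \<open>\<pi>(a) \<xi> = lim \<pi>(e\<^sub>\<alpha>) \<pi>(a) \<xi>\<close> shows that nondegeneracy is
  inherited. Cohen's factorization theorem, applied to the \<open>\<L>(A)\<close>-modules \<open>A\<close> (left
  multiplication) and \<open>\<L>(A)\<close> (right multiplication, for which \<open>(e\<^sub>\<alpha>)\<close> is a right
  approximate identity), gives \<open>A = \<L>(A) A\<close> and \<open>\<L>(A) = \<L>(A) \<L>(A)\<close>; factoring
  \<open>a = l b\<close> reduces the multiplier conditions on \<open>A\<close> and on \<open>\<L>(A)\<close> to each other.

  A cc homomorphism \<open>\<theta>\<close> of \<open>\<L>(A)\<close> extends by \<open>\<pi>(a) \<xi> = lim \<theta>(a e\<^sub>\<alpha>) \<xi>\<close>. The limit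
  exists at \<open>\<xi> = \<theta>(y) \<zeta>\<close>, where it is \<open>\<theta>(a y) \<zeta>\<close>, hence, the net being uniformly
  bounded, on the closed span \<open>K\<close> of \<open>\<theta>(\<L>(A)) H\<close>; and on \<open>K\<^sup>\<perp>\<close> all \<open>\<theta>(y)\<close>
  vanish. If \<open>K = H\<close>, any cc extension agrees with \<open>\<pi>\<close> on \<open>\<theta>(\<L>(A)) H\<close>, hence everywhere.
\<close>

section \<open>Cohen factorization\<close>

lemma convergent_geometric_increments:
  fixes f :: "nat \<Rightarrow> 'a::banach"
  assumes "\<And>n. norm (f (Suc n) - f n) \<le> C * r ^ n" and "0 \<le> r" "r < 1"
  shows "convergent f"
proof -
  have "summable (\<lambda>n. C * r ^ n)"
    using assms by (intro summable_mult summable_geometric) auto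
  then have "summable (\<lambda>n. f (Suc n) - f n)"
    by (rule summable_comparison_test[rotated]) (use assms in auto)
  then obtain S where "(\<lambda>n. f (Suc n) - f n) sums S"
    by (auto simp: summable_def)
  then have "(\<lambda>n. (f n - f 0) + f 0) \<longlonglongrightarrow> S + f 0"
    by (intro tendsto_add) (auto simp: sums_def sum_lessThan_telescope)
  then show ?thesis
    by (auto simp: convergent_def)
qed

locale cohen_setting =
  fixes mul :: "'m::banach \<Rightarrow> 'm \<Rightarrow> 'm"
    and L X :: "'m set" and F :: "'i filter" and e :: "'i \<Rightarrow> 'm"
  assumes bilinear: "bounded_bilinear mul"
    and norm_mul_le: "\<And>a b. norm (mul a b) \<le> norm a * norm b"
    and mul_assoc: "\<And>a b y. mul (mul a b) y = mul a (mul b y)"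
    and closed_L: "closed L" and subspace_L: "subspace L"
    and mul_L: "\<And>a b. a \<in> L \<Longrightarrow> b \<in> L \<Longrightarrow> mul a b \<in> L"
    and closed_X: "closed X" and subspace_X: "subspace X"
    and mul_X: "\<And>a y. a \<in> L \<Longrightarrow> y \<in> X \<Longrightarrow> mul a y \<in> X"
    and F_ne_bot: "F \<noteq> bot"
    and e_in_L: "\<And>\<alpha>. e \<alpha> \<in> L" and norm_e: "\<And>\<alpha>. norm (e \<alpha>) \<le> 1"
    and left_unit: "\<And>y. y \<in> X \<Longrightarrow> ((\<lambda>\<alpha>. mul (e \<alpha>) y) \<longlongrightarrow> y) F"
    and right_unit: "\<And>s. s \<in> L \<Longrightarrow> ((\<lambda>\<alpha>. mul s (e \<alpha>)) \<longlongrightarrow> s) F"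
begin

interpretation mul: bounded_bilinear mul
  by (rule bilinear)

lemma average_surjective:
  assumes a: "a \<in> L" "norm a \<le> 1" and z: "z \<in> X"
  shows "\<exists>y\<in>X. (2/3) *\<^sub>R y + (1/3) *\<^sub>R mul a y = z"
proof -
  define G where "G y = (3/2) *\<^sub>R z - (1/2) *\<^sub>R mul a y" for y
  have "\<exists>!y\<in>X. G y = y"
  proof (rule Banach_fix)
    show "complete X" "X \<noteq> {}"
      using closed_X z by (auto simp: complete_eq_closed)
    show "G ` X \<subseteq> X"
      using subspace_X a z by (auto simp: G_def intro!: subspace_diff subspace_scale mul_X)
    show "dist (G y1) (G y2) \<le> 1/2 * dist y1 y2" for y1 y2
    proof -
      have "dist (G y1) (G y2) = (1/2) * norm (mul a (y1 - y2))"
        by (simp add: G_def dist_norm mul.diff_right norm_minus_commute flip: scaleR_diff_right)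
      also have "\<dots> \<le> (1/2) * (norm a * norm (y1 - y2))"
        using norm_mul_le by (intro mult_left_mono) auto
      also have "\<dots> \<le> 1/2 * dist y1 y2"
        using a by (simp add: dist_norm mult_left_le_one_le)
      finally show ?thesis .
    qed
  qed simp_all
  then obtain y where "y \<in> X" "G y = y"
    by blast
  moreover have "(2/3) *\<^sub>R y + (1/3) *\<^sub>R mul a y = (2/3) *\<^sub>R (G y + (1/2) *\<^sub>R mul a y)"
    using \<open>G y = y\<close> by (simp add: scaleR_add_right)
  then have "(2/3) *\<^sub>R y + (1/3) *\<^sub>R mul a y = z"
    by (simp add: G_def)
  ultimately show ?thesis
    by blast
qed

lemma average_preimage_close:
  assumes "norm a \<le> 1" and avg: "(2/3) *\<^sub>R y' + (1/3) *\<^sub>R mul a y' = y"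
  shows "norm (y' - y) \<le> norm (mul a y - y)"
proof -
  define w where "w = y' - mul a y'"
  have w: "(2/3) *\<^sub>R w + (1/3) *\<^sub>R mul a w = y - mul a y"
    unfolding w_def avg[symmetric] by (simp add: mul.add_right mul.scaleR_right mul.diff_right algebra_simps)
  have "norm (mul a w) \<le> norm w"
    using norm_mul_le[of a w] assms(1) by (meson mult_left_le_one_le norm_ge_zero order_trans)
  moreover have "norm ((2/3) *\<^sub>R w) - norm ((1/3) *\<^sub>R mul a w) \<le> norm (y - mul a y)"
    using norm_diff_ineq[of "(2/3) *\<^sub>R w" "(1/3) *\<^sub>R mul a w"] unfolding w .
  ultimately have "(1/3) * norm w \<le> norm (mul a y - y)"
    by (simp add: norm_minus_commute)
  moreover have "y' - y = (1/3) *\<^sub>R w"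
    unfolding avg[symmetric] w_def by (simp add: algebra_simps flip: scaleR_add_left)
  ultimately show ?thesis
    by simp
qed

text \<open>Cohen's iteration keeps \<open>x = \<delta> y + s y\<close> while \<open>\<delta>\<close> shrinks geometrically and
  \<open>y, s\<close> move by at most \<open>\<delta>\<close>; in the limit \<open>x = s y\<close>.\<close>

lemma factorization_step:
  assumes y: "y \<in> X" and s: "s \<in> L" and x: "x = \<delta> *\<^sub>R y + mul s y" and \<delta>: "0 < \<delta>"
  shows "\<exists>y'\<in>X. \<exists>s'\<in>L. x = ((2/3) * \<delta>) *\<^sub>R y' + mul s' y'
            \<and> norm (y' - y) \<le> \<delta> \<and> norm (s' - s) \<le> \<delta>"
proof -
  have "\<forall>\<^sub>F \<alpha> in F. dist (mul (e \<alpha>) y) y < \<delta> \<and> dist (mul s (e \<alpha>)) s < \<delta>"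
    using tendstoD[OF left_unit[OF y] \<delta>] tendstoD[OF right_unit[OF s] \<delta>] by (rule eventually_conj)
  then obtain \<alpha> where "dist (mul (e \<alpha>) y) y < \<delta> \<and> dist (mul s (e \<alpha>)) s < \<delta>"
    using eventually_happens'[OF F_ne_bot] by blast
  then obtain a where a: "a \<in> L" "norm a \<le> 1"
    and ay: "norm (mul a y - y) < \<delta>" and sa: "norm (mul s a - s) < \<delta>"
    using e_in_L norm_e by (auto simp: dist_norm)
  obtain y' where y': "y' \<in> X" and avg: "(2/3) *\<^sub>R y' + (1/3) *\<^sub>R mul a y' = y"
    using average_surjective[OF a y] by blast
  define s' where "s' = (2/3) *\<^sub>R s + (1/3) *\<^sub>R mul s a + ((1/3) * \<delta>) *\<^sub>R a"
  have "s' \<in> L"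
    unfolding s'_def using subspace_L s a by (intro subspace_add subspace_scale mul_L)
  moreover have "x = ((2/3) * \<delta>) *\<^sub>R y' + mul s' y'"
    unfolding x avg[symmetric] s'_def
    by (simp add: mul.add_left mul.add_right mul.scaleR_left mul.scaleR_right mul_assoc algebra_simps)
  moreover have "norm (y' - y) \<le> \<delta>"
    using average_preimage_close[OF a(2) avg] ay by simp
  moreover have "norm (s' - s) \<le> \<delta>"
  proof -
    have "s' - s = (1/3) *\<^sub>R (mul s a - s) + ((1/3) * \<delta>) *\<^sub>R a"
      by (simp add: s'_def algebra_simps flip: scaleR_add_left)
    then have "norm (s' - s) \<le> (1/3) * norm (mul s a - s) + (1/3) * \<delta> * norm a"
      using norm_triangle_ineq[of "(1/3) *\<^sub>R (mul s a - s)" "((1/3) * \<delta>) *\<^sub>R a"] \<delta> by simp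
    also have "\<dots> \<le> (1/3) * \<delta> + (1/3) * \<delta> * 1"
      using sa a(2) \<delta> by (intro add_mono mult_left_mono) auto
    finally show ?thesis
      using \<delta> by linarith
  qed
  ultimately show ?thesis
    using y' by blast
qed

theorem factorization:
  assumes x: "x \<in> X"
  shows "\<exists>l\<in>L. \<exists>y\<in>X. x = mul l y"
proof -
  define P where "P n p \<longleftrightarrow> fst p \<in> X \<and> snd p \<in> L \<and> x = (2/3)^n *\<^sub>R fst p + mul (snd p) (fst p)"
    for n and p :: "'m \<times> 'm"
  define Q where "Q n p p' \<longleftrightarrow> norm (fst p' - fst p) \<le> 1 * (2/3)^n \<and> norm (snd p' - snd p) \<le> 1 * (2/3)^n"
    for n and p p' :: "'m \<times> 'm"
  have "\<exists>f. \<forall>n. P n (f n) \<and> Q n (f n) (f (Suc n))"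
  proof (rule dependent_nat_choice)
    show "\<exists>p. P 0 p"
      using x subspace_L by (intro exI[of _ "(x, 0)"]) (simp add: P_def subspace_0 mul.zero_left)
    show "\<exists>p'. P (Suc n) p' \<and> Q n p p'" if "P n p" for n p
      using factorization_step[of "fst p" "snd p" x "(2/3)^n"] that by (auto simp: P_def Q_def)
  qed
  then obtain f where P: "\<And>n. P n (f n)" and Q: "\<And>n. Q n (f n) (f (Suc n))"
    by blast
  obtain y where y: "(\<lambda>n. fst (f n)) \<longlonglongrightarrow> y"
    using convergent_geometric_increments[of "\<lambda>n. fst (f n)" 1 "2/3"] Q by (auto simp: Q_def convergent_def)
  obtain l where l: "(\<lambda>n. snd (f n)) \<longlonglongrightarrow> l"
    using convergent_geometric_increments[of "\<lambda>n. snd (f n)" 1 "2/3"] Q by (auto simp: Q_def convergent_def)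
  have "y \<in> X" "l \<in> L"
    using closed_sequentially[OF closed_X _ y] closed_sequentially[OF closed_L _ l] P
    by (auto simp: P_def)
  have "(\<lambda>n. (2/3)^n *\<^sub>R fst (f n) + mul (snd (f n)) (fst (f n))) \<longlonglongrightarrow> 0 *\<^sub>R y + mul l y"
    by (intro tendsto_intros mul.tendsto y l LIMSEQ_power_zero) simp
  then have "(\<lambda>n. x) \<longlonglongrightarrow> mul l y"
    using P by (simp add: P_def)
  then have "x = mul l y"
    by (rule LIMSEQ_const_iff[THEN iffD1])
  with \<open>y \<in> X\<close> \<open>l \<in> L\<close> show ?thesis
    by blast
qed

end

context chilbert
begin

subclass banach ..

end

interpretation complex_module: module "scaleC :: complex \<Rightarrow> 'a::chilbert \<Rightarrow> 'a"
  by unfold_locales (simp_all add: scaleC_add_right scaleC_add_left scaleC_scaleC scaleC_one)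

lemma cinner_add_left: "cinner (x + y) z = cinner x z + cinner y (z::'a::chilbert)"
  by (metis cinner_commute cinner_add_right complex_cnj_add)

lemma cinner_scaleC_left: "cinner (scaleC c x) y = cnj c * cinner x (y::'a::chilbert)"
  by (metis cinner_commute cinner_scaleC_right complex_cnj_mult complex_cnj_cnj)

lemma cinner_minus_right: "cinner x (- y) = - cinner x (y::'a::chilbert)"
proof -
  have "cinner x 0 = 0"
    using cinner_add_right[of x 0 0] by simp
  then show ?thesis
    using cinner_add_right[of x y "- y"] by (simp add: eq_neg_iff_add_eq_0 add.commute)
qed

lemma cinner_scaleR_right: "cinner x (scaleR r y) = of_real r * cinner x (y::'a::chilbert)"
  by (metis cinner_scaleC_right scaleC_of_real)

lemma cinner_self: "cinner x x = of_real ((norm (x::'a::chilbert))\<^sup>2)"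
proof -
  have "(norm x)\<^sup>2 = Re (cinner x x)"
    using norm_cinner[of x] cinner_self_nonneg[of x] by simp
  then show ?thesis
    using cinner_self_real[of x] by (simp add: complex_eq_iff)
qed

lemma norm_scaleC: "norm (scaleC c x) = cmod c * norm (x::'a::chilbert)"
proof -
  have "of_real ((norm (scaleC c x))\<^sup>2) = (of_real ((cmod c * norm x)\<^sup>2) :: complex)"
    unfolding cinner_self[symmetric] cinner_scaleC_left cinner_scaleC_right
    by (simp add: cinner_self power_mult_distrib complex_norm_square mult_ac flip: of_real_power)
  then have "(norm (scaleC c x))\<^sup>2 = (cmod c * norm x)\<^sup>2"
    using of_real_eq_iff by blast
  then show ?thesis
    by (simp add: power2_eq_iff_nonneg)
qed

lemma norm_add_square:
  "(norm (x + y))\<^sup>2 = (norm x)\<^sup>2 + (norm y)\<^sup>2 + 2 * Re (cinner x (y::'a::chilbert))"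
proof -
  have "of_real ((norm (x + y))\<^sup>2) = cinner x x + cinner y y + (cinner x y + cnj (cinner x y))"
    unfolding cinner_self[symmetric]
    by (simp add: cinner_add_left cinner_add_right algebra_simps flip: cinner_commute)
  then have "(of_real ((norm (x + y))\<^sup>2) :: complex) = of_real ((norm x)\<^sup>2 + (norm y)\<^sup>2 + 2 * Re (cinner x y))"
    by (simp add: cinner_self complex_add_cnj)
  then show ?thesis
    using of_real_eq_iff by blast
qed

lemma parallelogram_law:
  "(norm (x - y))\<^sup>2 + (norm (x + y))\<^sup>2 = 2 * (norm x)\<^sup>2 + 2 * (norm (y::'a::chilbert))\<^sup>2"
  using norm_add_square[of x y] norm_add_square[of x "- y"] by (simp add: cinner_minus_right)

lemma bounded_linear_scaleC: "bounded_linear (scaleC c :: 'a::chilbert \<Rightarrow> 'a)"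
  by (rule bounded_linear_intro[where K = "cmod c"])
    (auto simp: scaleC_add_right norm_scaleC scaleC_scaleC mult.commute simp flip: scaleC_of_real)

lemma c_span_eq_span: "c_span S = complex_module.span S"
proof
  show "c_span S \<subseteq> complex_module.span S"
    unfolding c_span_def
    by (auto intro!: complex_module.span_sum complex_module.span_scale simp: complex_module.span_base)
next
  show "complex_module.span S \<subseteq> c_span S"
  proof
    fix x assume "x \<in> complex_module.span S"
    then obtain t r where t: "finite t" "t \<subseteq> S" and x: "x = (\<Sum>a\<in>t. scaleC (r a) a)"
      by (auto simp: complex_module.span_explicit)
    obtain h where h: "bij_betw h {..<card t} t"
      using ex_bij_betw_nat_finite[OF t(1)] by (auto simp: atLeast0LessThan)
    have "x = (\<Sum>k<card t. scaleC (r (h k)) (h k))"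
      unfolding x by (rule sum.reindex_bij_betw[OF h, symmetric])
    moreover have "\<forall>k<card t. h k \<in> S"
      using h t(2) by (auto dest: bij_betwE)
    ultimately show "x \<in> c_span S"
      unfolding c_span_def
      by (intro CollectI exI[where x = "card t"] exI[where x = "\<lambda>k. r (h k)"] exI[where x = h]) simp
  qed
qed

lemma complex_subspace_closure:
  fixes W :: "'a::chilbert set"
  assumes W: "complex_module.subspace W"
  shows "complex_module.subspace (closure W)"
proof (rule complex_module.subspaceI)
  show "0 \<in> closure W"
    using W closure_subset complex_module.subspace_0 by blast
  show "scaleC c x \<in> closure W" if "x \<in> closure W" for c x
  proof -
    have "scaleC c ` closure W \<subseteq> closure W"
      using W by (intro image_closure_subset linear_continuous_on bounded_linear_scaleC)
        (auto intro!: closure_subset[THEN subsetD] complex_module.subspace_scale)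
    then show ?thesis
      using that by blast
  qed
  show "x + y \<in> closure W" if x: "x \<in> closure W" and y: "y \<in> closure W" for x y
  proof -
    have "(\<lambda>x. x + v) ` closure W \<subseteq> closure W" if "v \<in> W" for v
      using W that by (intro image_closure_subset continuous_intros)
        (auto intro!: closure_subset[THEN subsetD] complex_module.subspace_add)
    then have "(\<lambda>v. x + v) ` closure W \<subseteq> closure W"
      using x by (intro image_closure_subset continuous_intros) auto
    then show ?thesis
      using y by blast
  qed
qed

lemma closure_span_subset_closure_span:
  fixes S T :: "'a::chilbert set"
  assumes "S \<subseteq> closure (complex_module.span T)"
  shows "closure (complex_module.span S) \<subseteq> closure (complex_module.span T)"
  using assms
  by (intro closure_minimal complex_module.span_minimal complex_subspace_closure) auto

lemma complex_subspace_imp_convex: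
  fixes W :: "'a::chilbert set"
  assumes "complex_module.subspace W"
  shows "convex W"
  using assms unfolding convex_def
  by (metis complex_module.subspace_add complex_module.subspace_scale scaleC_of_real)

lemma convex_minimizing_sequence_Cauchy:
  fixes \<xi> :: "'a::chilbert"
  assumes "convex W" and ws: "\<And>n. ws n \<in> W" and d: "\<And>w. w \<in> W \<Longrightarrow> d \<le> norm (\<xi> - w)" "0 \<le> d"
    and min: "\<And>n. (norm (\<xi> - ws n))\<^sup>2 \<le> d\<^sup>2 + inverse (real (Suc n))"
  shows "Cauchy ws"
proof (rule CauchyI)
  have bound: "(norm (ws m - ws n))\<^sup>2 \<le> 2 * inverse (real (Suc m)) + 2 * inverse (real (Suc n))" for m n
  proof -
    define c where "c = (1/2) *\<^sub>R ws m + (1/2) *\<^sub>R ws n"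
    have "c \<in> W"
      unfolding c_def using \<open>convex W\<close> ws by (intro convexD) auto
    have "(\<xi> - ws m) + (\<xi> - ws n) = 2 *\<^sub>R (\<xi> - c)"
      by (simp add: c_def algebra_simps scaleR_2)
    then have "2 * d \<le> norm ((\<xi> - ws m) + (\<xi> - ws n))"
      using d(1)[OF \<open>c \<in> W\<close>] by simp
    then have "4 * d\<^sup>2 \<le> (norm ((\<xi> - ws m) + (\<xi> - ws n)))\<^sup>2"
      using d(2) power_mono[of "2 * d" _ 2] by (simp add: power_mult_distrib)
    moreover have "(norm (ws m - ws n))\<^sup>2 + (norm ((\<xi> - ws m) + (\<xi> - ws n)))\<^sup>2
        = 2 * (norm (\<xi> - ws m))\<^sup>2 + 2 * (norm (\<xi> - ws n))\<^sup>2"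
      using parallelogram_law[of "\<xi> - ws m" "\<xi> - ws n"] by (simp add: norm_minus_commute)
    ultimately show ?thesis
      using min[of m] min[of n] by linarith
  qed
  fix \<epsilon> :: real assume "0 < \<epsilon>"
  obtain M :: nat where M: "4 / \<epsilon>\<^sup>2 < real M"
    using reals_Archimedean2 by blast
  have "norm (ws m - ws n) < \<epsilon>" if "M \<le> m" "M \<le> n" for m n
  proof -
    have "inverse (real (Suc m)) \<le> inverse (real (Suc M))" "inverse (real (Suc n)) \<le> inverse (real (Suc M))"
      using that by (auto intro: le_imp_inverse_le)
    then have "(norm (ws m - ws n))\<^sup>2 \<le> 4 * inverse (real (Suc M))"
      using bound[of m n] by linarith
    also have "\<dots> < \<epsilon>\<^sup>2"
    proof -
      have "4 < \<epsilon>\<^sup>2 * real M"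
        using M \<open>0 < \<epsilon>\<close> by (simp add: field_simps)
      also have "\<dots> \<le> \<epsilon>\<^sup>2 * real (Suc M)"
        by (intro mult_left_mono) auto
      finally show ?thesis
        by (simp add: field_simps)
    qed
    finally show ?thesis
      using \<open>0 < \<epsilon>\<close> by (simp add: power_less_imp_less_base)
  qed
  then show "\<exists>M. \<forall>m\<ge>M. \<forall>n\<ge>M. norm (ws m - ws n) < \<epsilon>"
    by blast
qed

lemma exists_nearest_point:
  fixes \<xi> :: "'a::chilbert"
  assumes "closed W" "convex W" "W \<noteq> {}"
  shows "\<exists>k\<in>W. \<forall>w\<in>W. norm (\<xi> - k) \<le> norm (\<xi> - w)"
proof -
  define d where "d = Inf ((\<lambda>w. norm (\<xi> - w)) ` W)"
  have bdd: "bdd_below ((\<lambda>w. norm (\<xi> - w)) ` W)"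
    by (rule bdd_belowI[of _ 0]) auto
  have d: "d \<le> norm (\<xi> - w)" if "w \<in> W" for w
    unfolding d_def using that bdd by (auto intro: cInf_lower)
  have "0 \<le> d"
    unfolding d_def using \<open>W \<noteq> {}\<close> by (auto intro: cInf_greatest)
  have "\<exists>w\<in>W. (norm (\<xi> - w))\<^sup>2 \<le> d\<^sup>2 + inverse (real (Suc n))" for n
  proof -
    have "d < sqrt (d\<^sup>2 + inverse (real (Suc n)))"
      using \<open>0 \<le> d\<close> real_sqrt_less_mono[of "d\<^sup>2" "d\<^sup>2 + inverse (real (Suc n))"] by simp
    then obtain w where "w \<in> W" "norm (\<xi> - w) < sqrt (d\<^sup>2 + inverse (real (Suc n)))"
      using cInf_lessD[of "(\<lambda>w. norm (\<xi> - w)) ` W"] \<open>W \<noteq> {}\<close> unfolding d_def by auto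
    then have "sqrt ((norm (\<xi> - w))\<^sup>2) < sqrt (d\<^sup>2 + inverse (real (Suc n)))"
      by simp
    then show ?thesis
      using \<open>w \<in> W\<close> by (auto simp only: real_sqrt_less_iff intro: less_imp_le)
  qed
  then obtain ws where ws: "\<And>n. ws n \<in> W" "\<And>n. (norm (\<xi> - ws n))\<^sup>2 \<le> d\<^sup>2 + inverse (real (Suc n))"
    by metis
  obtain k where k: "ws \<longlonglongrightarrow> k"
    using convex_minimizing_sequence_Cauchy[OF \<open>convex W\<close> ws(1) d \<open>0 \<le> d\<close> ws(2)]
    by (auto simp: Cauchy_convergent_iff convergent_def)
  have "k \<in> W"
    using closed_sequentially[OF \<open>closed W\<close> _ k] ws(1) by blast
  have "(norm (\<xi> - k))\<^sup>2 \<le> d\<^sup>2 + 0"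
  proof (rule tendsto_le[OF trivial_limit_sequentially])
    show "(\<lambda>n. d\<^sup>2 + inverse (real (Suc n))) \<longlonglongrightarrow> d\<^sup>2 + 0"
      by (intro tendsto_add tendsto_const LIMSEQ_inverse_real_of_nat)
    show "(\<lambda>n. (norm (\<xi> - ws n))\<^sup>2) \<longlonglongrightarrow> (norm (\<xi> - k))\<^sup>2"
      by (intro tendsto_intros k)
    show "\<forall>\<^sub>F n in sequentially. (norm (\<xi> - ws n))\<^sup>2 \<le> d\<^sup>2 + inverse (real (Suc n))"
      using ws(2) by simp
  qed
  then have "norm (\<xi> - k) \<le> d"
    using \<open>0 \<le> d\<close> by (simp add: power2_le_iff_abs_le)
  with \<open>k \<in> W\<close> d show ?thesis
    by (meson order_trans)
qed

lemma nearest_point_orthogonal: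
  fixes \<xi> :: "'a::chilbert"
  assumes W: "complex_module.subspace W" and k: "k \<in> W" "\<And>w. w \<in> W \<Longrightarrow> norm (\<xi> - k) \<le> norm (\<xi> - w)"
    and v: "v \<in> W"
  shows "cinner v (\<xi> - k) = 0"
proof -
  define r where "r = \<xi> - k"
  define z where "z = cinner v r"
  define t :: real where "t = 1 / ((norm v)\<^sup>2 + 1)"
  have "0 < (norm v)\<^sup>2 + 1"
    by (simp add: add_nonneg_pos)
  then have "0 < t" "t * (norm v)\<^sup>2 \<le> 1"
    by (simp_all add: t_def field_simps)
  have "k + scaleC (of_real t * z) v \<in> W"
    using W k v by (intro complex_module.subspace_add complex_module.subspace_scale)
  then have "norm r \<le> norm (r - scaleC (of_real t * z) v)"
    using k(2) by (simp add: r_def algebra_simps)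
  then have "(norm r)\<^sup>2 \<le> (norm (r - scaleC (of_real t * z) v))\<^sup>2"
    by (simp add: power_mono)
  also have "\<dots> = (norm r)\<^sup>2 + (t * cmod z)\<^sup>2 * (norm v)\<^sup>2 - 2 * (t * (cmod z)\<^sup>2)"
  proof -
    have "cinner r (scaleC (of_real t * z) v) = of_real (t * (cmod z)\<^sup>2)"
      unfolding z_def cinner_scaleC_right
      by (subst cinner_commute[of r v]) (simp add: complex_norm_square mult.assoc flip: of_real_power)
    then show ?thesis
      using norm_add_square[of r "- scaleC (of_real t * z) v"] \<open>0 < t\<close>
      by (simp add: cinner_minus_right norm_scaleC norm_mult power_mult_distrib)
  qed
  finally have "2 * (cmod z)\<^sup>2 \<le> (cmod z)\<^sup>2 * (t * (norm v)\<^sup>2)"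
    using \<open>0 < t\<close> by (simp add: power2_eq_square field_simps)
  also have "\<dots> \<le> (cmod z)\<^sup>2"
    using \<open>t * (norm v)\<^sup>2 \<le> 1\<close> by (simp add: mult_left_le)
  finally show ?thesis
    by (simp add: z_def r_def)
qed

lemma orthogonal_decomposition:
  fixes \<xi> :: "'a::chilbert"
  assumes "closed W" "complex_module.subspace W"
  shows "\<exists>k\<in>W. \<forall>v\<in>W. cinner v (\<xi> - k) = 0"
  using exists_nearest_point[of W \<xi>] nearest_point_orthogonal[of W] assms
    complex_subspace_imp_convex complex_module.subspace_0
  by (metis empty_iff)

lemma BH_iff_bounded_linear:
  "T \<in> BH \<longleftrightarrow> bounded_linear T \<and> (\<forall>c x. T (scaleC c x) = scaleC c (T x))"
proof
  assume "T \<in> BH"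
  then obtain K where K: "\<And>x. norm (T x) \<le> K * norm x" and lin: "clinear_op T"
    by (auto simp: BH_def bounded_op_def)
  then have "bounded_linear T"
    by (intro bounded_linear_intro[where K = K])
      (auto simp: clinear_op_def mult.commute simp flip: scaleC_of_real)
  with lin show "bounded_linear T \<and> (\<forall>c x. T (scaleC c x) = scaleC c (T x))"
    by (simp add: clinear_op_def)
next
  assume T: "bounded_linear T \<and> (\<forall>c x. T (scaleC c x) = scaleC c (T x))"
  then obtain K where "\<And>x. norm (T x) \<le> norm x * K"
    using bounded_linear.bounded by blast
  with T show "T \<in> BH"
    by (auto simp: BH_def bounded_op_def clinear_op_def linear_add bounded_linear.linear mult.commute)
qed

lemma BHI:
  assumes "\<And>x y. T (x + y) = T x + T y" "\<And>c x. T (scaleC c x) = scaleC c (T x)"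
    and "\<And>x. norm (T x) \<le> K * norm x"
  shows "T \<in> BH"
  using assms by (auto simp: BH_def bounded_op_def clinear_op_def)

lemma bounded_linear_BH: "T \<in> BH \<Longrightarrow> bounded_linear T"
  by (simp add: BH_iff_bounded_linear)

lemma BH_scaleC: "T \<in> BH \<Longrightarrow> T (scaleC c x) = scaleC c (T x)"
  by (simp add: BH_iff_bounded_linear)

lemma BH_add: "T \<in> BH \<Longrightarrow> T (x + y) = T x + T y"
  by (simp add: bounded_linear_BH bounded_linear.linear linear_add)

lemma BH_scaleR: "T \<in> BH \<Longrightarrow> T (r *\<^sub>R x) = r *\<^sub>R T x"
  by (simp add: bounded_linear_BH bounded_linear.linear linear_scale)

lemma BH_diff: "T \<in> BH \<Longrightarrow> T (x - y) = T x - T y"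
  by (simp add: bounded_linear_BH bounded_linear.linear linear_diff)

lemma BH_zero: "T \<in> BH \<Longrightarrow> T 0 = 0"
  by (simp add: bounded_linear_BH bounded_linear.linear linear_0)

lemma comp_in_BH: "S \<in> BH \<Longrightarrow> T \<in> BH \<Longrightarrow> S \<circ> T \<in> BH"
  by (simp add: BH_iff_bounded_linear bounded_linear_compose o_def)

lemma add_in_BH: "S \<in> BH \<Longrightarrow> T \<in> BH \<Longrightarrow> (\<lambda>x. S x + T x) \<in> BH"
  by (simp add: BH_iff_bounded_linear bounded_linear_add scaleC_add_right)

lemma diff_in_BH: "S \<in> BH \<Longrightarrow> T \<in> BH \<Longrightarrow> (\<lambda>x. S x - T x) \<in> BH"
  by (simp add: BH_iff_bounded_linear bounded_linear_sub complex_module.scale_right_diff_distrib)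

lemma scaleC_in_BH: "T \<in> BH \<Longrightarrow> (\<lambda>x. scaleC c (T x)) \<in> BH"
  by (simp add: BH_iff_bounded_linear bounded_linear_compose[OF bounded_linear_scaleC]
      scaleC_scaleC mult.commute)

lemma opnorm_eq_onorm:
  assumes "T \<in> BH"
  shows "opnorm T = onorm T"
proof -
  have bl: "bounded_linear T"
    using assms by (rule bounded_linear_BH)
  have le: "norm (T x) \<le> onorm T" if "norm x \<le> 1" for x
    using onorm[OF bl, of x] that onorm_pos_le[OF bl] by (meson mult_left_le order_trans)
  have bdd: "bdd_above {norm (T x) |x. norm x \<le> 1}"
    by (rule bdd_aboveI[of _ "onorm T"]) (use le in auto)
  have "opnorm T \<le> onorm T"
    unfolding opnorm_def using le by (intro cSup_least) (auto intro!: exI[of _ 0])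
  moreover have "onorm T \<le> opnorm T"
  proof (rule onorm_bound)
    show "0 \<le> opnorm T"
      unfolding opnorm_def using BH_zero[OF assms]
      by (intro cSup_upper2[OF _ _ bdd, of 0]) (auto intro!: exI[of _ 0])
    show "norm (T x) \<le> opnorm T * norm x" for x
  proof (cases "x = 0")
    case True
    then show ?thesis
      using BH_zero[OF assms] by simp
  next
    case False
    then have "norm (T (scaleR (1 / norm x) x)) \<le> opnorm T"
      unfolding opnorm_def by (intro cSup_upper[OF _ bdd]) auto
    then show ?thesis
      using False linear_scale[OF bounded_linear.linear[OF bl]] by (simp add: field_simps)
  qed
  qed
  ultimately show ?thesis
    by simp
qed

lemma opnorm_apply_le: "T \<in> BH \<Longrightarrow> norm (T x) \<le> opnorm T * norm x"
  by (simp add: opnorm_eq_onorm onorm bounded_linear_BH)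

lemma opnorm_nonneg: "T \<in> BH \<Longrightarrow> 0 \<le> opnorm T"
  by (simp add: opnorm_eq_onorm onorm_pos_le bounded_linear_BH)

lemma opnorm_comp_le: "S \<in> BH \<Longrightarrow> T \<in> BH \<Longrightarrow> opnorm (S \<circ> T) \<le> opnorm S * opnorm T"
  by (simp add: opnorm_eq_onorm comp_in_BH onorm_compose bounded_linear_BH)

text \<open>Norm limits of operators are taken in the Banach space \<^typ>\<open>'a \<Rightarrow>\<^sub>L 'a\<close>,
  into which \<^const>\<open>BH\<close> embeds through \<^const>\<open>Blinfun\<close>.\<close>

lemma Blinfun_apply_BH [simp]: "T \<in> BH \<Longrightarrow> blinfun_apply (Blinfun T) = T"
  by (simp add: bounded_linear_Blinfun_apply bounded_linear_BH)

lemma Blinfun_inject_BH: "S \<in> BH \<Longrightarrow> T \<in> BH \<Longrightarrow> Blinfun S = Blinfun T \<longleftrightarrow> S = T"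
  by (metis Blinfun_apply_BH)

lemma norm_Blinfun_BH: "T \<in> BH \<Longrightarrow> norm (Blinfun T) = opnorm T"
  by (simp add: norm_blinfun.rep_eq opnorm_eq_onorm)

lemma Blinfun_comp_BH: "S \<in> BH \<Longrightarrow> T \<in> BH \<Longrightarrow> Blinfun (S \<circ> T) = Blinfun S o\<^sub>L Blinfun T"
  by (intro blinfun_eqI) (simp add: comp_in_BH)

lemma Blinfun_add_BH: "S \<in> BH \<Longrightarrow> T \<in> BH \<Longrightarrow> Blinfun (\<lambda>x. S x + T x) = Blinfun S + Blinfun T"
  by (intro blinfun_eqI) (simp add: add_in_BH plus_blinfun.rep_eq)

lemma Blinfun_diff_BH: "S \<in> BH \<Longrightarrow> T \<in> BH \<Longrightarrow> Blinfun (\<lambda>x. S x - T x) = Blinfun S - Blinfun T"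
  by (intro blinfun_eqI) (simp add: diff_in_BH minus_blinfun.rep_eq)

lemma scaleR_in_BH: "T \<in> BH \<Longrightarrow> (\<lambda>x. r *\<^sub>R T x) \<in> BH"
  using scaleC_in_BH[of T "of_real r"] by (simp add: scaleC_of_real)

lemma Blinfun_scaleR_BH: "T \<in> BH \<Longrightarrow> Blinfun (\<lambda>x. r *\<^sub>R T x) = r *\<^sub>R Blinfun T"
  by (intro blinfun_eqI) (simp add: scaleR_in_BH scaleR_blinfun.rep_eq)

lemma opnorm_diff_eq_norm_Blinfun:
  "S \<in> BH \<Longrightarrow> T \<in> BH \<Longrightarrow> opnorm (\<lambda>x. S x - T x) = norm (Blinfun S - Blinfun T)"
  by (simp add: norm_Blinfun_BH diff_in_BH flip: Blinfun_diff_BH)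

lemma blinfun_compose_assoc: "(a o\<^sub>L b) o\<^sub>L c = a o\<^sub>L (b o\<^sub>L c)"
  by (intro blinfun_eqI) simp

lemma Blinfun_compose_in_image:
  assumes "u \<in> Blinfun ` S" "v \<in> Blinfun ` T" "S \<subseteq> BH" "T \<subseteq> BH"
    and "\<And>a b. a \<in> S \<Longrightarrow> b \<in> T \<Longrightarrow> a \<circ> b \<in> U"
  shows "u o\<^sub>L v \<in> Blinfun ` U"
proof -
  obtain a b where "a \<in> S" "b \<in> T" "u = Blinfun a" "v = Blinfun b"
    using assms(1,2) by blast
  moreover have "a \<in> BH" "b \<in> BH"
    using assms(3,4) \<open>a \<in> S\<close> \<open>b \<in> T\<close> by blast+
  ultimately have "u o\<^sub>L v = Blinfun (a \<circ> b)"
    by (simp add: Blinfun_comp_BH)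
  then show ?thesis
    using assms(5) \<open>a \<in> S\<close> \<open>b \<in> T\<close> by blast
qed

lemma closed_complex_linear_blinfuns:
  "closed {s :: 'a::chilbert \<Rightarrow>\<^sub>L 'a. \<forall>c x. s (scaleC c x) = scaleC c (s x)}"
  by (intro closed_Collect_all closed_Collect_eq linear_continuous_on blinfun.bounded_linear_left
      bounded_linear_compose[OF bounded_linear_scaleC])

lemma blinfun_apply_in_BH:
  "(\<And>c x. blinfun_apply s (scaleC c x) = scaleC c (s x)) \<Longrightarrow> blinfun_apply s \<in> BH"
  by (simp add: BH_iff_bounded_linear blinfun.bounded_linear_right)

lemma matnorm_1:
  assumes "T \<in> BH"
  shows "matnorm 1 (\<lambda>i j. T) = opnorm T"
proof -
  have one: "{..<1::nat} = {0}"
    by auto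
  have "{sqrt (\<Sum>i<(1::nat). (norm (\<Sum>j<(1::nat). T (x j)))\<^sup>2) | x. (\<Sum>j<(1::nat). (norm (x j))\<^sup>2) \<le> 1}
      = {norm (T v) | v. norm v \<le> 1}"
  proof (intro equalityI subsetI)
    fix z assume "z \<in> {sqrt (\<Sum>i<(1::nat). (norm (\<Sum>j<(1::nat). T (x j)))\<^sup>2) | x. (\<Sum>j<(1::nat). (norm (x j))\<^sup>2) \<le> 1}"
    then obtain x :: "nat \<Rightarrow> 'a" where "z = norm (T (x 0))" "(norm (x 0))\<^sup>2 \<le> 1"
      by (auto simp: one)
    then show "z \<in> {norm (T v) | v. norm v \<le> 1}"
      by (auto simp: power_le_one_iff)
  next
    fix z assume "z \<in> {norm (T v) | v. norm v \<le> 1}"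
    then obtain v where "z = norm (T v)" "norm v \<le> 1"
      by blast
    then show "z \<in> {sqrt (\<Sum>i<(1::nat). (norm (\<Sum>j<(1::nat). T (x j)))\<^sup>2) | x. (\<Sum>j<(1::nat). (norm (x j))\<^sup>2) \<le> 1}"
      by (intro CollectI exI[of _ "\<lambda>_. v"]) (simp add: one power_le_one)
  qed
  then show ?thesis
    by (simp add: matnorm_def opnorm_def)
qed

lemma bdd_above_matnorm:
  fixes T :: "nat \<Rightarrow> nat \<Rightarrow> 'b::chilbert \<Rightarrow> 'b"
  assumes T: "\<forall>i<n. \<forall>j<n. T i j \<in> BH"
  shows "bdd_above {sqrt (\<Sum>i<n. (norm (\<Sum>j<n. T i j (x j)))\<^sup>2) | x. (\<Sum>j<n. (norm (x j))\<^sup>2) \<le> 1}"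
proof (rule bdd_aboveI)
  fix z assume "z \<in> {sqrt (\<Sum>i<n. (norm (\<Sum>j<n. T i j (x j)))\<^sup>2) | x. (\<Sum>j<n. (norm (x j))\<^sup>2) \<le> 1}"
  then obtain x where z: "z = sqrt (\<Sum>i<n. (norm (\<Sum>j<n. T i j (x j)))\<^sup>2)"
    and x: "(\<Sum>j<n. (norm (x j))\<^sup>2) \<le> 1"
    by blast
  have "norm (x j) \<le> 1" if "j < n" for j
  proof -
    have "(norm (x j))\<^sup>2 \<le> (\<Sum>j<n. (norm (x j))\<^sup>2)"
      using that by (intro member_le_sum) auto
    then have "(norm (x j))\<^sup>2 \<le> 1"
      using x by linarith
    then show ?thesis
      by (metis abs_norm_cancel abs_square_le_1)
  qed
  then have "norm (T i j (x j)) \<le> opnorm (T i j)" if "i < n" "j < n" for i j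
    using that T opnorm_apply_le[of "T i j" "x j"] opnorm_nonneg[of "T i j"]
    by (meson mult_left_le order_trans)
  then have "norm (\<Sum>j<n. T i j (x j)) \<le> (\<Sum>j<n. opnorm (T i j))" if "i < n" for i
    using that by (intro order_trans[OF norm_sum sum_mono]) auto
  then have "(\<Sum>i<n. (norm (\<Sum>j<n. T i j (x j)))\<^sup>2) \<le> (\<Sum>i<n. (\<Sum>j<n. opnorm (T i j))\<^sup>2)"
    by (intro sum_mono power_mono) auto
  then show "z \<le> sqrt (\<Sum>i<n. (\<Sum>j<n. opnorm (T i j))\<^sup>2)"
    by (simp add: z)
qed

lemma matnorm_upper:
  fixes T :: "nat \<Rightarrow> nat \<Rightarrow> 'b::chilbert \<Rightarrow> 'b"
  assumes "\<forall>i<n. \<forall>j<n. T i j \<in> BH" and "(\<Sum>j<n. (norm (x j))\<^sup>2) \<le> 1"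
  shows "sqrt (\<Sum>i<n. (norm (\<Sum>j<n. T i j (x j)))\<^sup>2) \<le> matnorm n T"
  unfolding matnorm_def using assms by (intro cSup_upper bdd_above_matnorm) auto

lemma matnorm_least:
  fixes T :: "nat \<Rightarrow> nat \<Rightarrow> 'b::chilbert \<Rightarrow> 'b"
  assumes "\<And>x. (\<Sum>j<n. (norm (x j))\<^sup>2) \<le> 1 \<Longrightarrow> sqrt (\<Sum>i<n. (norm (\<Sum>j<n. T i j (x j)))\<^sup>2) \<le> M"
  shows "matnorm n T \<le> M"
  unfolding matnorm_def using assms by (intro cSup_least) (auto intro!: exI[of _ "\<lambda>_. 0"])

lemma matnorm_comp_contraction:
  fixes T :: "nat \<Rightarrow> nat \<Rightarrow> 'b::chilbert \<Rightarrow> 'b"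
  assumes T: "\<forall>i<n. \<forall>j<n. T i j \<in> BH" and E: "E \<in> BH" "opnorm E \<le> 1"
  shows "matnorm n (\<lambda>i j. T i j \<circ> E) \<le> matnorm n T"
proof (rule matnorm_least)
  fix x :: "nat \<Rightarrow> 'b" assume x: "(\<Sum>j<n. (norm (x j))\<^sup>2) \<le> 1"
  have "norm (E (x j)) \<le> norm (x j)" for j
    using opnorm_apply_le[OF E(1), of "x j"] E(2) opnorm_nonneg[OF E(1)]
    by (meson mult_left_le_one_le norm_ge_zero order_trans)
  then have "(\<Sum>j<n. (norm (E (x j)))\<^sup>2) \<le> 1"
    using x by (meson order_trans sum_mono power_mono norm_ge_zero)
  then show "sqrt (\<Sum>i<n. (norm (\<Sum>j<n. (T i j \<circ> E) (x j)))\<^sup>2) \<le> matnorm n T"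
    using matnorm_upper[OF T, of "\<lambda>j. E (x j)"] by simp
qed

lemma cc_hom_BH: "cc_hom S \<theta> \<Longrightarrow> a \<in> S \<Longrightarrow> \<theta> a \<in> BH"
  by (simp add: cc_hom_def)

lemma cc_hom_add: "cc_hom S \<theta> \<Longrightarrow> a \<in> S \<Longrightarrow> b \<in> S \<Longrightarrow> \<theta> (\<lambda>x. a x + b x) = (\<lambda>y. \<theta> a y + \<theta> b y)"
  by (simp add: cc_hom_def)

lemma cc_hom_scaleC: "cc_hom S \<theta> \<Longrightarrow> a \<in> S \<Longrightarrow> \<theta> (\<lambda>x. scaleC c (a x)) = (\<lambda>y. scaleC c (\<theta> a y))"
  by (simp add: cc_hom_def)

lemma cc_hom_comp: "cc_hom S \<theta> \<Longrightarrow> a \<in> S \<Longrightarrow> b \<in> S \<Longrightarrow> \<theta> (a \<circ> b) = \<theta> a \<circ> \<theta> b"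
  by (simp add: cc_hom_def)

lemma cc_hom_matnorm:
  "cc_hom S \<theta> \<Longrightarrow> 1 \<le> n \<Longrightarrow> \<forall>i<n. \<forall>j<n. a i j \<in> S \<Longrightarrow> matnorm n (\<lambda>i j. \<theta> (a i j)) \<le> matnorm n a"
  by (simp add: cc_hom_def)

lemma cc_hom_subset: "S \<subseteq> T \<Longrightarrow> cc_hom T \<pi> \<Longrightarrow> cc_hom S \<pi>"
  unfolding cc_hom_def by (meson subsetD)

lemma cc_hom_opnorm_le:
  assumes "cc_hom S \<theta>" "s \<in> S" "s \<in> BH"
  shows "opnorm (\<theta> s) \<le> opnorm s"
proof -
  have "matnorm 1 (\<lambda>i j. \<theta> s) \<le> matnorm 1 (\<lambda>i j. s)"
    using cc_hom_matnorm[OF assms(1), of 1 "\<lambda>i j. s"] assms(2) by blast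
  then show ?thesis
    by (simp only: matnorm_1 assms(3) cc_hom_BH[OF assms(1,2)])
qed

lemma cc_hom_diff:
  assumes "cc_hom S \<theta>" "a \<in> S" "b \<in> S" "(\<lambda>x. a x - b x) \<in> S"
  shows "\<theta> (\<lambda>x. a x - b x) = (\<lambda>y. \<theta> a y - \<theta> b y)"
proof -
  have "\<theta> a = \<theta> (\<lambda>x. (a x - b x) + b x)"
    by simp
  also have "\<dots> = (\<lambda>y. \<theta> (\<lambda>x. a x - b x) y + \<theta> b y)"
    using assms by (intro cc_hom_add)
  finally show ?thesis
    by (simp add: fun_eq_iff)
qed

locale cc_hom_on_diff_closed =
  fixes S :: "('a::chilbert \<Rightarrow> 'a) set" and \<theta> :: "('a \<Rightarrow> 'a) \<Rightarrow> ('b::chilbert \<Rightarrow> 'b)"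
  assumes cc_hom: "cc_hom S \<theta>" and subset_BH: "S \<subseteq> BH"
    and diff_closed: "\<And>a b. a \<in> S \<Longrightarrow> b \<in> S \<Longrightarrow> (\<lambda>x. a x - b x) \<in> S"
begin

lemma apply_diff_le:
  assumes "a \<in> S" "b \<in> S"
  shows "norm (\<theta> a \<xi> - \<theta> b \<xi>) \<le> norm (Blinfun a - Blinfun b) * norm \<xi>"
proof -
  have ab: "(\<lambda>x. a x - b x) \<in> S"
    using assms by (rule diff_closed)
  then have "norm (\<theta> a \<xi> - \<theta> b \<xi>) \<le> opnorm (\<theta> (\<lambda>x. a x - b x)) * norm \<xi>"
    using cc_hom_diff[OF cc_hom assms ab] opnorm_apply_le[OF cc_hom_BH[OF cc_hom ab]] by simp
  also have "\<dots> \<le> opnorm (\<lambda>x. a x - b x) * norm \<xi>"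
    using ab subset_BH by (intro mult_right_mono cc_hom_opnorm_le[OF cc_hom]) auto
  also have "\<dots> = norm (Blinfun a - Blinfun b) * norm \<xi>"
    using assms subset_BH by (subst opnorm_diff_eq_norm_Blinfun) auto
  finally show ?thesis .
qed

lemma tendsto_apply:
  assumes "\<And>\<alpha>. f \<alpha> \<in> S" "T \<in> S" "((\<lambda>\<alpha>. Blinfun (f \<alpha>)) \<longlongrightarrow> Blinfun T) F"
  shows "((\<lambda>\<alpha>. \<theta> (f \<alpha>) \<xi>) \<longlongrightarrow> \<theta> T \<xi>) F"
proof (rule LIM_zero_cancel, rule Lim_null_comparison)
  show "\<forall>\<^sub>F \<alpha> in F. norm (\<theta> (f \<alpha>) \<xi> - \<theta> T \<xi>) \<le> norm (Blinfun (f \<alpha>) - Blinfun T) * norm \<xi>"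
    using assms by (intro always_eventually allI apply_diff_le)
  have "((\<lambda>\<alpha>. norm (Blinfun (f \<alpha>) - Blinfun T)) \<longlongrightarrow> 0) F"
    using assms(3) by (intro tendsto_norm_zero LIM_zero)
  then show "((\<lambda>\<alpha>. norm (Blinfun (f \<alpha>) - Blinfun T) * norm \<xi>) \<longlongrightarrow> 0) F"
    by (rule tendsto_mult_left_zero)
qed

end

lemma directed_setD:
  assumes "directed_set le"
  shows "le i i" and "le i j \<Longrightarrow> le j k \<Longrightarrow> le i k" and "\<exists>k. le i k \<and> le j k"
  using assms unfolding directed_set_def by blast+

lemma eventually_net_filter:
  assumes "directed_set le"
  shows "eventually P (net_filter le) \<longleftrightarrow> (\<exists>i. \<forall>j. le i j \<longrightarrow> P j)"
proof -
  have "eventually P (net_filter le) \<longleftrightarrow> (\<exists>i\<in>UNIV. eventually P (principal {j. le i j}))"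
    unfolding net_filter_def
  proof (rule eventually_INF_base)
    fix a b
    obtain k where "le a k" "le b k"
      using directed_setD(3)[OF assms] by blast
    then have "{j. le k j} \<subseteq> {j. le a j} \<inter> {j. le b j}"
      using directed_setD(2)[OF assms] by blast
    then show "\<exists>k\<in>UNIV. principal {j. le k j} \<le> inf (principal {j. le a j}) (principal {j. le b j})"
      by (auto simp: inf_principal)
  qed simp
  then show ?thesis
    by (simp add: eventually_principal)
qed

lemma net_filter_ne_bot: "directed_set le \<Longrightarrow> net_filter le \<noteq> bot"
  using directed_setD(1) by (force simp: trivial_limit_def eventually_net_filter)

lemma op_net_tendsto_iff_Blinfun:
  assumes "\<And>\<alpha>. f \<alpha> \<in> BH" "T \<in> BH"
  shows "op_net_tendsto le f T \<longleftrightarrow> ((\<lambda>\<alpha>. Blinfun (f \<alpha>)) \<longlongrightarrow> Blinfun T) (net_filter le)"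
  unfolding op_net_tendsto_def tendsto_dist_iff[of "\<lambda>\<alpha>. Blinfun (f \<alpha>)"] dist_norm
  using assms by (simp add: opnorm_diff_eq_norm_Blinfun)

lemma Cauchy_net_convergent:
  fixes f :: "'i \<Rightarrow> 'a::complete_space"
  assumes "\<And>\<epsilon>. 0 < \<epsilon> \<Longrightarrow> \<exists>P. eventually P F \<and> (\<forall>x y. P x \<and> P y \<longrightarrow> dist (f x) (f y) < \<epsilon>)"
  shows "\<exists>l. (f \<longlongrightarrow> l) F"
proof -
  have "cauchy_filter (filtermap f F)"
    using assms by (auto simp: cauchy_filter_metric_filtermap)
  then show ?thesis
    by (auto simp: filterlim_def convergent_filter_iff dest: cauchy_filter_convergent)
qed

lemma closed_right_unit_set:
  fixes E :: "'i \<Rightarrow> 'a::real_normed_vector \<Rightarrow>\<^sub>L 'a"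
  assumes E: "\<And>\<alpha>. norm (E \<alpha>) \<le> 1"
  shows "closed {s :: 'a \<Rightarrow>\<^sub>L 'b::real_normed_vector. ((\<lambda>\<alpha>. s o\<^sub>L E \<alpha>) \<longlongrightarrow> s) F}"
    (is "closed ?R")
  unfolding closure_subset_eq[symmetric]
proof
  fix s assume s: "s \<in> closure ?R"
  have "\<forall>\<^sub>F \<alpha> in F. dist (s o\<^sub>L E \<alpha>) s < \<epsilon>" if "0 < \<epsilon>" for \<epsilon>
  proof -
    obtain t where t: "t \<in> ?R" "dist t s < \<epsilon>/3"
      using s \<open>0 < \<epsilon>\<close> closure_approachable[of s ?R] by (meson divide_pos_pos zero_less_numeral)
    have "((\<lambda>\<alpha>. t o\<^sub>L E \<alpha>) \<longlongrightarrow> t) F"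
      using t(1) by simp
    then have "\<forall>\<^sub>F \<alpha> in F. dist (t o\<^sub>L E \<alpha>) t < \<epsilon>/3"
      by (rule tendstoD) (use \<open>0 < \<epsilon>\<close> in simp)
    then show ?thesis
    proof eventually_elim
      case (elim \<alpha>)
      have "dist (s o\<^sub>L E \<alpha>) (t o\<^sub>L E \<alpha>) = norm ((s - t) o\<^sub>L E \<alpha>)"
        by (simp add: dist_norm bounded_bilinear.diff_left[OF bounded_bilinear_blinfun_compose])
      also have "\<dots> \<le> norm (s - t)"
        using norm_blinfun_compose[of "s - t" "E \<alpha>"] E[of \<alpha>]
        by (meson mult_left_le norm_ge_zero order_trans)
      finally have "dist (s o\<^sub>L E \<alpha>) (t o\<^sub>L E \<alpha>) < \<epsilon>/3"
        using t(2) by (simp add: dist_norm norm_minus_commute)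
      then show ?case
        using elim t(2) dist_triangle[of "s o\<^sub>L E \<alpha>" s "t o\<^sub>L E \<alpha>"] dist_triangle[of "t o\<^sub>L E \<alpha>" s t]
        by (simp add: dist_commute)
    qed
  qed
  then show "s \<in> ?R"
    by (simp add: tendsto_iff)
qed

lemma subspace_right_unit_set: "subspace {s. ((\<lambda>\<alpha>. s o\<^sub>L E \<alpha>) \<longlongrightarrow> s) F}"
  by (rule subspaceI)
    (auto intro: tendsto_add tendsto_scaleR
      simp: bounded_bilinear.add_left[OF bounded_bilinear_blinfun_compose]
        bounded_bilinear.scaleR_left[OF bounded_bilinear_blinfun_compose])

definition convergence_set :: "('i \<Rightarrow> 'b \<Rightarrow> 'c::topological_space) \<Rightarrow> 'i filter \<Rightarrow> 'b set" where
  "convergence_set T F = {\<xi>. \<exists>l. ((\<lambda>\<alpha>. T \<alpha> \<xi>) \<longlongrightarrow> l) F}"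

lemma closed_convergence_set:
  fixes T :: "'i \<Rightarrow> 'b::chilbert \<Rightarrow> 'b"
  assumes T: "\<And>\<alpha>. T \<alpha> \<in> BH" "\<And>\<alpha>. opnorm (T \<alpha>) \<le> M"
  shows "closed (convergence_set T F)"
  unfolding closure_subset_eq[symmetric]
proof
  fix \<xi> assume \<xi>: "\<xi> \<in> closure (convergence_set T F)"
  have "\<exists>P. eventually P F \<and> (\<forall>\<alpha> \<beta>. P \<alpha> \<and> P \<beta> \<longrightarrow> dist (T \<alpha> \<xi>) (T \<beta> \<xi>) < \<epsilon>)" if "0 < \<epsilon>" for \<epsilon>
  proof -
    define K where "K = \<bar>M\<bar> + 1"
    define \<delta> where "\<delta> = \<epsilon> / (4 * K)"
    have "0 < K" "M \<le> K"
      by (simp_all add: K_def add_nonneg_pos)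
    then have "0 < \<delta>"
      using \<open>0 < \<epsilon>\<close> by (simp add: \<delta>_def)
    then obtain \<eta> l where \<eta>: "dist \<eta> \<xi> < \<delta>" and l: "((\<lambda>\<alpha>. T \<alpha> \<eta>) \<longlongrightarrow> l) F"
      using \<xi> by (auto simp: closure_approachable convergence_set_def)
    have near: "dist (T \<alpha> \<xi>) (T \<alpha> \<eta>) \<le> \<epsilon>/4" for \<alpha>
    proof -
      have "dist (T \<alpha> \<xi>) (T \<alpha> \<eta>) \<le> opnorm (T \<alpha>) * norm (\<xi> - \<eta>)"
        using opnorm_apply_le[OF T(1), of \<alpha> "\<xi> - \<eta>"] by (simp add: dist_norm BH_diff[OF T(1)])
      also have "\<dots> \<le> K * \<delta>"
        using T(2)[of \<alpha>] \<open>M \<le> K\<close> \<open>0 < K\<close> \<eta> by (intro mult_mono) (auto simp: dist_norm norm_minus_commute)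
      also have "\<dots> = \<epsilon>/4"
        using \<open>0 < K\<close> by (simp add: \<delta>_def)
      finally show ?thesis .
    qed
    show ?thesis
    proof (intro exI conjI allI impI)
      show "eventually (\<lambda>\<alpha>. dist (T \<alpha> \<eta>) l < \<epsilon>/4) F"
        using l \<open>0 < \<epsilon>\<close> by (intro tendstoD) auto
      fix \<alpha> \<beta> assume "dist (T \<alpha> \<eta>) l < \<epsilon>/4 \<and> dist (T \<beta> \<eta>) l < \<epsilon>/4"
      then show "dist (T \<alpha> \<xi>) (T \<beta> \<xi>) < \<epsilon>"
        using near[of \<alpha>] near[of \<beta>] dist_triangle[of "T \<alpha> \<xi>" "T \<beta> \<xi>" "T \<alpha> \<eta>"]
          dist_triangle[of "T \<alpha> \<eta>" "T \<beta> \<xi>" l] dist_triangle[of l "T \<beta> \<xi>" "T \<beta> \<eta>"]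
          dist_commute[of l "T \<beta> \<eta>"] dist_commute[of "T \<beta> \<eta>" "T \<beta> \<xi>"]
        by linarith
    qed
  qed
  then have "\<exists>l. ((\<lambda>\<alpha>. T \<alpha> \<xi>) \<longlongrightarrow> l) F"
    by (intro Cauchy_net_convergent[of F "\<lambda>\<alpha>. T \<alpha> \<xi>"]) simp
  then show "\<xi> \<in> convergence_set T F"
    by (simp add: convergence_set_def)
qed

lemma subspace_convergence_set:
  fixes T :: "'i \<Rightarrow> 'b::chilbert \<Rightarrow> 'b"
  assumes T: "\<And>\<alpha>. T \<alpha> \<in> BH"
  shows "complex_module.subspace (convergence_set T F)"
  unfolding convergence_set_def
proof (rule complex_module.subspaceI)
  show "0 \<in> {\<xi>. \<exists>l. ((\<lambda>\<alpha>. T \<alpha> \<xi>) \<longlongrightarrow> l) F}"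
    by (auto simp: BH_zero[OF T])
  show "x + y \<in> {\<xi>. \<exists>l. ((\<lambda>\<alpha>. T \<alpha> \<xi>) \<longlongrightarrow> l) F}"
    if "x \<in> {\<xi>. \<exists>l. ((\<lambda>\<alpha>. T \<alpha> \<xi>) \<longlongrightarrow> l) F}" "y \<in> {\<xi>. \<exists>l. ((\<lambda>\<alpha>. T \<alpha> \<xi>) \<longlongrightarrow> l) F}" for x y
    using that by (auto simp: BH_add[OF T] intro: tendsto_add)
  show "scaleC c x \<in> {\<xi>. \<exists>l. ((\<lambda>\<alpha>. T \<alpha> \<xi>) \<longlongrightarrow> l) F}"
    if "x \<in> {\<xi>. \<exists>l. ((\<lambda>\<alpha>. T \<alpha> \<xi>) \<longlongrightarrow> l) F}" for c x
    using that by (auto simp: BH_scaleC[OF T] intro: bounded_linear.tendsto[OF bounded_linear_scaleC])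
qed

lemma BH_eq_on_closure_span:
  assumes "P \<in> BH" "Q \<in> BH" "\<And>\<xi>. \<xi> \<in> S \<Longrightarrow> P \<xi> = Q \<xi>"
    and "\<xi> \<in> closure (complex_module.span S)"
  shows "P \<xi> = Q \<xi>"
proof -
  have "closed {\<xi>. P \<xi> = Q \<xi>}"
    using assms by (intro closed_Collect_eq linear_continuous_on bounded_linear_BH)
  moreover have "complex_module.subspace {\<xi>. P \<xi> = Q \<xi>}"
    using assms by (intro complex_module.subspaceI) (simp_all add: BH_zero BH_add BH_scaleC)
  ultimately have "closure (complex_module.span S) \<subseteq> {\<xi>. P \<xi> = Q \<xi>}"
    using assms(3) by (intro closure_minimal complex_module.span_minimal) auto
  then show ?thesis
    using assms(4) by blast
qed

definition op_range :: "('a \<Rightarrow> 'a) set \<Rightarrow> (('a \<Rightarrow> 'a) \<Rightarrow> ('b \<Rightarrow> 'b)) \<Rightarrow> 'b set" where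
  "op_range S \<pi> = {\<pi> a \<xi> | a \<xi>. a \<in> S}"

lemma nondegenerate_iff_op_range:
  "nondegenerate S \<pi> \<longleftrightarrow> closure (complex_module.span (op_range S \<pi>)) = UNIV"
  by (simp add: nondegenerate_def op_range_def c_span_eq_span)

locale property_L_algebra =
  fixes A :: "('a::chilbert \<Rightarrow> 'a) set" and le :: "'i \<Rightarrow> 'i \<Rightarrow> bool" and e :: "'i \<Rightarrow> 'a \<Rightarrow> 'a"
  assumes op_algebra: "op_algebra A" and property_L: "property_L A le e"
begin

abbreviation "L \<equiv> LA A le e"
abbreviation "N \<equiv> net_filter le"

lemma A_subset_BH: "A \<subseteq> BH"
  using op_algebra by (simp add: op_algebra_def)

lemma BH_if_in_A: "a \<in> A \<Longrightarrow> a \<in> BH"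
  using A_subset_BH by blast

lemma zero_in_A: "(\<lambda>x. 0) \<in> A"
  using op_algebra by (simp add: op_algebra_def)

lemma add_in_A: "a \<in> A \<Longrightarrow> b \<in> A \<Longrightarrow> (\<lambda>x. a x + b x) \<in> A"
  using op_algebra by (simp add: op_algebra_def)

lemma scaleC_in_A: "a \<in> A \<Longrightarrow> (\<lambda>x. scaleC c (a x)) \<in> A"
  using op_algebra by (simp add: op_algebra_def)

lemma comp_in_A: "a \<in> A \<Longrightarrow> b \<in> A \<Longrightarrow> a \<circ> b \<in> A"
  using op_algebra by (simp add: op_algebra_def)

lemma diff_in_A: "a \<in> A \<Longrightarrow> b \<in> A \<Longrightarrow> (\<lambda>x. a x - b x) \<in> A"
  using add_in_A[OF _ scaleC_in_A[of b "- 1"]] by (simp add: scaleC_one)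

lemma in_A_if_approximable:
  "T \<in> BH \<Longrightarrow> (\<And>\<epsilon>. 0 < \<epsilon> \<Longrightarrow> \<exists>S\<in>A. opnorm (\<lambda>x. T x - S x) < \<epsilon>) \<Longrightarrow> T \<in> A"
  using op_algebra unfolding op_algebra_def by blast

lemma N_ne_bot: "N \<noteq> bot"
  using property_L by (simp add: property_L_def left_cai_def net_filter_ne_bot)

lemma e_in_A: "e \<alpha> \<in> A"
  using property_L by (simp add: property_L_def left_cai_def)

lemma e_in_BH: "e \<alpha> \<in> BH"
  using e_in_A A_subset_BH by blast

lemma opnorm_e_le_1: "opnorm (e \<alpha>) \<le> 1"
  using property_L by (simp add: property_L_def left_cai_def)

lemma left_cai_tendsto:
  assumes "a \<in> A"
  shows "((\<lambda>\<alpha>. Blinfun (e \<alpha> \<circ> a)) \<longlongrightarrow> Blinfun a) N"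
proof -
  have "op_net_tendsto le (\<lambda>\<alpha>. e \<alpha> \<circ> a) a"
    using property_L assms by (simp add: property_L_def left_cai_def)
  then show ?thesis
    using assms A_subset_BH by (subst (asm) op_net_tendsto_iff_Blinfun) (auto simp: comp_in_BH e_in_BH)
qed

lemma LA_iff: "x \<in> L \<longleftrightarrow> x \<in> A \<and> ((\<lambda>\<alpha>. Blinfun x o\<^sub>L Blinfun (e \<alpha>)) \<longlongrightarrow> Blinfun x) N"
  using A_subset_BH
  by (auto simp: LA_def op_net_tendsto_iff_Blinfun comp_in_BH e_in_BH Blinfun_comp_BH)

lemma LA_subset_A: "L \<subseteq> A"
  by (simp add: LA_def)

lemma LA_subset_BH: "L \<subseteq> BH"
  using LA_subset_A A_subset_BH by blast

lemma e_in_LA: "e \<alpha> \<in> L"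
  using property_L e_in_A
  by (simp add: LA_iff property_L_def op_net_tendsto_iff_Blinfun comp_in_BH e_in_BH Blinfun_comp_BH)

lemma comp_in_LA:
  assumes "a \<in> A" "y \<in> L"
  shows "a \<circ> y \<in> L"
proof -
  have "((\<lambda>\<alpha>. Blinfun a o\<^sub>L (Blinfun y o\<^sub>L Blinfun (e \<alpha>))) \<longlongrightarrow> Blinfun a o\<^sub>L Blinfun y) N"
    using assms(2) by (intro bounded_bilinear.tendsto[OF bounded_bilinear_blinfun_compose]) (auto simp: LA_iff)
  moreover have "Blinfun (a \<circ> y) = Blinfun a o\<^sub>L Blinfun y"
    using assms LA_subset_A by (auto simp: Blinfun_comp_BH BH_if_in_A)
  ultimately show ?thesis
    using assms LA_subset_A by (auto simp: LA_iff comp_in_A blinfun_compose_assoc)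
qed

lemma diff_in_LA:
  assumes "x \<in> L" "y \<in> L"
  shows "(\<lambda>z. x z - y z) \<in> L"
proof -
  have "((\<lambda>\<alpha>. (Blinfun x o\<^sub>L Blinfun (e \<alpha>)) - (Blinfun y o\<^sub>L Blinfun (e \<alpha>))) \<longlongrightarrow> Blinfun x - Blinfun y) N"
    using assms by (intro tendsto_diff) (auto simp: LA_iff)
  then show ?thesis
    using assms LA_subset_A
    by (auto simp: LA_iff diff_in_A Blinfun_diff_BH BH_if_in_A
        bounded_bilinear.diff_left[OF bounded_bilinear_blinfun_compose])
qed

lemma subspace_Blinfun_A: "subspace (Blinfun ` A)"
proof (rule subspaceI)
  show "0 \<in> Blinfun ` A"
    using zero_in_A by (intro image_eqI[of _ _ "\<lambda>x. 0"]) (auto intro: blinfun_eqI simp: A_subset_BH[THEN subsetD])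
  show "u + v \<in> Blinfun ` A" if uv: "u \<in> Blinfun ` A" "v \<in> Blinfun ` A" for u v
  proof -
    obtain a b where "a \<in> A" "b \<in> A" "u = Blinfun a" "v = Blinfun b"
      using uv by blast
    then have "u + v = Blinfun (\<lambda>x. a x + b x)"
      by (simp add: Blinfun_add_BH BH_if_in_A)
    then show ?thesis
      using add_in_A \<open>a \<in> A\<close> \<open>b \<in> A\<close> by blast
  qed
  show "r *\<^sub>R u \<in> Blinfun ` A" if u: "u \<in> Blinfun ` A" for r u
  proof -
    obtain a where "a \<in> A" "u = Blinfun a"
      using u by blast
    moreover have "(\<lambda>x. r *\<^sub>R a x) \<in> A"
      using scaleC_in_A[OF \<open>a \<in> A\<close>, of "of_real r"] by (simp add: scaleC_of_real)
    moreover have "r *\<^sub>R u = Blinfun (\<lambda>x. r *\<^sub>R a x)"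
      using \<open>a \<in> A\<close> \<open>u = Blinfun a\<close> by (simp add: Blinfun_scaleR_BH BH_if_in_A)
    ultimately show ?thesis
      by blast
  qed
qed

lemma closed_Blinfun_A: "closed (Blinfun ` A)"
  unfolding closure_subset_eq[symmetric]
proof
  fix s assume s: "s \<in> closure (Blinfun ` A)"
  have "Blinfun ` A \<subseteq> {s :: 'a \<Rightarrow>\<^sub>L 'a. \<forall>c x. s (scaleC c x) = scaleC c (s x)}"
    using A_subset_BH by (auto simp: BH_scaleC)
  then have "s \<in> {s :: 'a \<Rightarrow>\<^sub>L 'a. \<forall>c x. s (scaleC c x) = scaleC c (s x)}"
    using s closure_minimal closed_complex_linear_blinfuns by blast
  then have T: "blinfun_apply s \<in> BH" and s_eq: "Blinfun (blinfun_apply s) = s"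
    by (simp_all add: blinfun_apply_in_BH blinfun_apply_inverse)
  have "blinfun_apply s \<in> A"
  proof (rule in_A_if_approximable[OF T])
    fix \<epsilon> :: real assume "0 < \<epsilon>"
    then obtain a where "a \<in> A" "dist (Blinfun a) s < \<epsilon>"
      using s by (auto simp: closure_approachable)
    then show "\<exists>S\<in>A. opnorm (\<lambda>x. s x - S x) < \<epsilon>"
      using T A_subset_BH
      by (intro bexI[of _ a]) (auto simp: opnorm_diff_eq_norm_Blinfun s_eq dist_norm norm_minus_commute)
  qed
  then show "s \<in> Blinfun ` A"
    using s_eq by force
qed

lemma Blinfun_LA_eq:
  "Blinfun ` L = Blinfun ` A \<inter> {s. ((\<lambda>\<alpha>. s o\<^sub>L Blinfun (e \<alpha>)) \<longlongrightarrow> s) N}"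
  using LA_subset_A by (auto simp: LA_iff)

lemma closed_Blinfun_LA: "closed (Blinfun ` L)"
  unfolding Blinfun_LA_eq
  using e_in_BH opnorm_e_le_1 by (intro closed_Int closed_Blinfun_A closed_right_unit_set) (simp add: norm_Blinfun_BH)

lemma subspace_Blinfun_LA: "subspace (Blinfun ` L)"
  unfolding Blinfun_LA_eq by (intro subspace_inter subspace_Blinfun_A subspace_right_unit_set)

lemma compose_in_Blinfun_LA: "u \<in> Blinfun ` L \<Longrightarrow> v \<in> Blinfun ` L \<Longrightarrow> u o\<^sub>L v \<in> Blinfun ` L"
  by (rule Blinfun_compose_in_image[OF _ _ LA_subset_BH LA_subset_BH comp_in_LA[OF LA_subset_A[THEN subsetD]]])

lemma cohen_setting_left: "cohen_setting (o\<^sub>L) (Blinfun ` L) (Blinfun ` A) N (\<lambda>\<alpha>. Blinfun (e \<alpha>))"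
proof (rule cohen_setting.intro)
  show "u o\<^sub>L y \<in> Blinfun ` A" if "u \<in> Blinfun ` L" "y \<in> Blinfun ` A" for u y
    using that
    by (rule Blinfun_compose_in_image[OF _ _ LA_subset_BH A_subset_BH comp_in_A[OF LA_subset_A[THEN subsetD]]])
  show "((\<lambda>\<alpha>. Blinfun (e \<alpha>) o\<^sub>L y) \<longlongrightarrow> y) N" if "y \<in> Blinfun ` A" for y
    using that left_cai_tendsto by (auto simp: Blinfun_comp_BH e_in_BH BH_if_in_A)
  show "((\<lambda>\<alpha>. s o\<^sub>L Blinfun (e \<alpha>)) \<longlongrightarrow> s) N" if "s \<in> Blinfun ` L" for s
    using that by (auto simp: LA_iff)
qed (use e_in_LA opnorm_e_le_1 in \<open>auto simp: compose_in_Blinfun_LA bounded_bilinear_blinfun_compose norm_blinfun_compose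
    blinfun_compose_assoc closed_Blinfun_LA subspace_Blinfun_LA closed_Blinfun_A subspace_Blinfun_A
    N_ne_bot norm_Blinfun_BH e_in_BH\<close>)

lemma cohen_setting_right:
  "cohen_setting (\<lambda>a b. b o\<^sub>L a) (Blinfun ` L) (Blinfun ` L) N (\<lambda>\<alpha>. Blinfun (e \<alpha>))"
proof (rule cohen_setting.intro)
  show "bounded_bilinear (\<lambda>a b. b o\<^sub>L a)"
    by (rule bounded_bilinear.flip[OF bounded_bilinear_blinfun_compose])
  show "norm (b o\<^sub>L a) \<le> norm a * norm b" for a b :: "'a \<Rightarrow>\<^sub>L 'a"
    using norm_blinfun_compose[of b a] by (simp add: mult.commute)
  show "((\<lambda>\<alpha>. y o\<^sub>L Blinfun (e \<alpha>)) \<longlongrightarrow> y) N" if "y \<in> Blinfun ` L" for y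
    using that by (auto simp: LA_iff)
  show "((\<lambda>\<alpha>. Blinfun (e \<alpha>) o\<^sub>L s) \<longlongrightarrow> s) N" if "s \<in> Blinfun ` L" for s
    using that left_cai_tendsto LA_subset_A by (auto simp: Blinfun_comp_BH e_in_BH BH_if_in_A)
qed (use e_in_LA opnorm_e_le_1 in \<open>auto simp: compose_in_Blinfun_LA blinfun_compose_assoc closed_Blinfun_LA
    subspace_Blinfun_LA N_ne_bot norm_Blinfun_BH e_in_BH\<close>)

theorem factorization_A:
  assumes "a \<in> A"
  shows "\<exists>l\<in>L. \<exists>b\<in>A. a = l \<circ> b"
proof -
  obtain l b where "l \<in> L" "b \<in> A" "Blinfun a = Blinfun l o\<^sub>L Blinfun b"
    using cohen_setting.factorization[OF cohen_setting_left, of "Blinfun a"] assms by blast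
  then show ?thesis
    using assms LA_subset_A A_subset_BH
    by (metis Blinfun_comp_BH Blinfun_inject_BH comp_in_BH subsetD)
qed

theorem factorization_LA:
  assumes "x \<in> L"
  shows "\<exists>y\<in>L. \<exists>l\<in>L. x = y \<circ> l"
proof -
  obtain l y where "l \<in> L" "y \<in> L" "Blinfun x = Blinfun y o\<^sub>L Blinfun l"
    using cohen_setting.factorization[OF cohen_setting_right, of "Blinfun x"] assms by blast
  then show ?thesis
    using assms LA_subset_BH
    by (metis Blinfun_comp_BH Blinfun_inject_BH comp_in_BH subsetD)
qed

end

section \<open>Restriction to \<open>\<L>(A)\<close> and left multipliers\<close>

context property_L_algebra
begin

lemma cc_hom_on_diff_closed_A: "cc_hom A \<pi> \<Longrightarrow> cc_hom_on_diff_closed A \<pi>"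
  by unfold_locales (auto simp: A_subset_BH diff_in_A)

lemma cc_hom_on_diff_closed_LA: "cc_hom L \<theta> \<Longrightarrow> cc_hom_on_diff_closed L \<theta>"
  by unfold_locales (auto simp: LA_subset_BH diff_in_LA)

lemma cc_hom_restrict: "cc_hom A \<pi> \<Longrightarrow> cc_hom L \<pi>"
  using LA_subset_A by (rule cc_hom_subset)

lemma nondegenerate_restrict:
  assumes \<pi>: "cc_hom A \<pi>" and nd: "nondegenerate A \<pi>"
  shows "nondegenerate L \<pi>"
proof -
  have "\<pi> a \<xi> \<in> closure (complex_module.span (op_range L \<pi>))" if "a \<in> A" for a \<xi>
  proof (rule Lim_in_closed_set[OF closed_closure _ N_ne_bot])
    have "\<pi> (e \<alpha> \<circ> a) \<xi> \<in> op_range L \<pi>" for \<alpha>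
      using cc_hom_comp[OF \<pi> e_in_A that] e_in_LA by (auto simp: op_range_def)
    then show "\<forall>\<^sub>F \<alpha> in N. \<pi> (e \<alpha> \<circ> a) \<xi> \<in> closure (complex_module.span (op_range L \<pi>))"
      using complex_module.span_superset closure_subset by (blast intro: always_eventually)
    show "((\<lambda>\<alpha>. \<pi> (e \<alpha> \<circ> a) \<xi>) \<longlongrightarrow> \<pi> a \<xi>) N"
      using that e_in_A
      by (intro cc_hom_on_diff_closed.tendsto_apply[OF cc_hom_on_diff_closed_A[OF \<pi>]] comp_in_A left_cai_tendsto)
  qed
  then have "closure (complex_module.span (op_range A \<pi>)) \<subseteq> closure (complex_module.span (op_range L \<pi>))"
    by (intro closure_span_subset_closure_span) (auto simp: op_range_def)
  with nd show ?thesis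
    by (auto simp: nondegenerate_iff_op_range)
qed

lemma multiplier_restrict:
  assumes \<pi>: "cc_hom A \<pi>" and T: "\<And>a. a \<in> A \<Longrightarrow> T \<circ> \<pi> a \<in> \<pi> ` A" and "x \<in> L"
  shows "T \<circ> \<pi> x \<in> \<pi> ` L"
proof -
  obtain y l where "y \<in> L" "l \<in> L" "x = y \<circ> l"
    using factorization_LA \<open>x \<in> L\<close> by blast
  have "y \<in> A" "l \<in> A"
    using \<open>y \<in> L\<close> \<open>l \<in> L\<close> LA_subset_A by blast+
  obtain b where "b \<in> A" "T \<circ> \<pi> y = \<pi> b"
    using T \<open>y \<in> A\<close> by blast
  have "T \<circ> \<pi> x = (T \<circ> \<pi> y) \<circ> \<pi> l"
    using cc_hom_comp[OF \<pi> \<open>y \<in> A\<close> \<open>l \<in> A\<close>] \<open>x = y \<circ> l\<close> by (simp add: comp_assoc)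
  also have "\<dots> = \<pi> (b \<circ> l)"
    using cc_hom_comp[OF \<pi> \<open>b \<in> A\<close> \<open>l \<in> A\<close>] \<open>T \<circ> \<pi> y = \<pi> b\<close> by simp
  finally show ?thesis
    using comp_in_LA \<open>b \<in> A\<close> \<open>l \<in> L\<close> by blast
qed

lemma multiplier_extend:
  assumes \<pi>: "cc_hom A \<pi>" and T: "\<And>x. x \<in> L \<Longrightarrow> T \<circ> \<pi> x \<in> \<pi> ` L" and "a \<in> A"
  shows "T \<circ> \<pi> a \<in> \<pi> ` A"
proof -
  obtain l b where "l \<in> L" "b \<in> A" "a = l \<circ> b"
    using factorization_A \<open>a \<in> A\<close> by blast
  obtain l' where "l' \<in> L" "T \<circ> \<pi> l = \<pi> l'"
    using T \<open>l \<in> L\<close> by blast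
  have "l \<in> A" "l' \<in> A"
    using \<open>l \<in> L\<close> \<open>l' \<in> L\<close> LA_subset_A by blast+
  have "T \<circ> \<pi> a = (T \<circ> \<pi> l) \<circ> \<pi> b"
    using cc_hom_comp[OF \<pi> \<open>l \<in> A\<close> \<open>b \<in> A\<close>] \<open>a = l \<circ> b\<close> by (simp add: comp_assoc)
  also have "\<dots> = \<pi> (l' \<circ> b)"
    using cc_hom_comp[OF \<pi> \<open>l' \<in> A\<close> \<open>b \<in> A\<close>] \<open>T \<circ> \<pi> l = \<pi> l'\<close> by simp
  finally show ?thesis
    using comp_in_A \<open>l' \<in> A\<close> \<open>b \<in> A\<close> by blast
qed

theorem left_multipliers_eq:
  assumes "cc_hom A \<pi>"
  shows "{T \<in> BH. \<forall>a\<in>A. T \<circ> \<pi> a \<in> \<pi> ` A} = {T \<in> BH. \<forall>a\<in>L. T \<circ> \<pi> a \<in> \<pi> ` L}"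
  using multiplier_restrict[OF assms] multiplier_extend[OF assms] by blast

end

section \<open>Extension from \<open>\<L>(A)\<close> to \<open>A\<close>\<close>

context property_L_algebra
begin

context
  fixes \<theta> :: "('a \<Rightarrow> 'a) \<Rightarrow> ('b::chilbert \<Rightarrow> 'b)"
  assumes \<theta>: "cc_hom L \<theta>"
begin

lemma theta_tendsto_apply:
  "(\<And>\<alpha>. f \<alpha> \<in> L) \<Longrightarrow> T \<in> L \<Longrightarrow> ((\<lambda>\<alpha>. Blinfun (f \<alpha>)) \<longlongrightarrow> Blinfun T) N
    \<Longrightarrow> ((\<lambda>\<alpha>. \<theta> (f \<alpha>) \<xi>) \<longlongrightarrow> \<theta> T \<xi>) N"
  by (rule cc_hom_on_diff_closed.tendsto_apply[OF cc_hom_on_diff_closed_LA[OF \<theta>]])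

lemma theta_comp_e_tendsto:
  assumes "y \<in> L"
  shows "((\<lambda>\<alpha>. \<theta> (y \<circ> e \<alpha>) \<xi>) \<longlongrightarrow> \<theta> y \<xi>) N"
  using assms LA_subset_A e_in_LA
  by (intro theta_tendsto_apply comp_in_LA) (auto simp: LA_iff Blinfun_comp_BH BH_if_in_A e_in_BH)

lemma theta_comp_tendsto:
  assumes "a \<in> A" "y \<in> L"
  shows "((\<lambda>\<alpha>. \<theta> (a \<circ> e \<alpha> \<circ> y) \<zeta>) \<longlongrightarrow> \<theta> (a \<circ> y) \<zeta>) N"
proof (rule theta_tendsto_apply)
  have "y \<in> A"
    using assms LA_subset_A by blast
  then have "((\<lambda>\<alpha>. Blinfun a o\<^sub>L Blinfun (e \<alpha> \<circ> y)) \<longlongrightarrow> Blinfun a o\<^sub>L Blinfun y) N"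
    by (intro bounded_bilinear.tendsto[OF bounded_bilinear_blinfun_compose] tendsto_const left_cai_tendsto)
  moreover have "Blinfun (a \<circ> e \<alpha> \<circ> y) = Blinfun a o\<^sub>L Blinfun (e \<alpha> \<circ> y)" for \<alpha>
    using Blinfun_comp_BH[of a "e \<alpha> \<circ> y"] assms \<open>y \<in> A\<close>
    by (simp add: BH_if_in_A e_in_BH comp_in_BH comp_assoc)
  moreover have "Blinfun (a \<circ> y) = Blinfun a o\<^sub>L Blinfun y"
    using assms \<open>y \<in> A\<close> by (simp add: Blinfun_comp_BH BH_if_in_A)
  ultimately show "((\<lambda>\<alpha>. Blinfun (a \<circ> e \<alpha> \<circ> y)) \<longlongrightarrow> Blinfun (a \<circ> y)) N"
    by simp
qed (use assms comp_in_LA e_in_A comp_in_A in auto)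

lemma norm_theta_e_le: "norm (\<theta> (e \<beta>) v) \<le> norm v"
proof -
  have "norm (\<theta> (e \<beta>) v) \<le> opnorm (\<theta> (e \<beta>)) * norm v"
    using cc_hom_BH[OF \<theta> e_in_LA] by (rule opnorm_apply_le)
  also have "\<dots> \<le> 1 * norm v"
    using order_trans[OF cc_hom_opnorm_le[OF \<theta> e_in_LA e_in_BH] opnorm_e_le_1]
    by (intro mult_right_mono) auto
  finally show ?thesis
    by simp
qed

lemma opnorm_theta_comp_e_le:
  assumes "a \<in> A"
  shows "opnorm (\<theta> (a \<circ> e \<alpha>)) \<le> opnorm a"
proof -
  have "opnorm (\<theta> (a \<circ> e \<alpha>)) \<le> opnorm (a \<circ> e \<alpha>)"
    using assms e_in_LA comp_in_LA LA_subset_BH by (intro cc_hom_opnorm_le[OF \<theta>]) auto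
  also have "\<dots> \<le> opnorm a * opnorm (e \<alpha>)"
    using assms by (intro opnorm_comp_le) (auto simp: BH_if_in_A e_in_BH)
  also have "\<dots> \<le> opnorm a"
    using opnorm_e_le_1 opnorm_nonneg[OF BH_if_in_A[OF assms]] by (simp add: mult_left_le)
  finally show ?thesis .
qed

text \<open>As \<open>\<theta>(e\<^sub>\<beta>) \<eta> \<perp> \<eta>\<close>, contractivity of \<open>\<theta>(e\<^sub>\<beta>)\<close> on
  \<open>\<eta> + t \<theta>(e\<^sub>\<gamma>) \<eta>\<close>, in the limit over \<open>\<gamma>\<close>, improves the factor \<open>t\<close>
  to \<open>1 + t\<close>; iterating forces \<open>\<theta>(e\<^sub>\<beta>) \<eta> = 0\<close>.\<close>

lemma theta_e_orthogonal_step: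
  assumes orth: "\<And>v. v \<in> op_range L \<theta> \<Longrightarrow> cinner v \<eta> = 0" and "0 \<le> t"
    and bound: "\<And>\<gamma>. t * (norm (\<theta> (e \<gamma>) \<eta>))\<^sup>2 \<le> (norm \<eta>)\<^sup>2"
  shows "(1 + t) * (norm (\<theta> (e \<beta>) \<eta>))\<^sup>2 \<le> (norm \<eta>)\<^sup>2"
proof -
  define w where "w \<gamma> = \<theta> (e \<gamma>) \<eta>" for \<gamma>
  have "(norm (w \<beta> + t *\<^sub>R \<theta> (e \<beta> \<circ> e \<gamma>) \<eta>))\<^sup>2 \<le> (norm \<eta>)\<^sup>2 * (1 + t)" for \<gamma>
  proof -
    have "w \<beta> + t *\<^sub>R \<theta> (e \<beta> \<circ> e \<gamma>) \<eta> = \<theta> (e \<beta>) (\<eta> + t *\<^sub>R w \<gamma>)"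
      using cc_hom_BH[OF \<theta> e_in_LA]
      by (simp add: w_def BH_add BH_scaleR cc_hom_comp[OF \<theta> e_in_LA e_in_LA])
    then have "(norm (w \<beta> + t *\<^sub>R \<theta> (e \<beta> \<circ> e \<gamma>) \<eta>))\<^sup>2 \<le> (norm (\<eta> + t *\<^sub>R w \<gamma>))\<^sup>2"
      using norm_theta_e_le by (simp add: power_mono)
    also have "\<dots> = (norm \<eta>)\<^sup>2 + t * (t * (norm (w \<gamma>))\<^sup>2)"
    proof -
      have "cinner \<eta> (w \<gamma>) = 0"
        using orth[of "w \<gamma>"] e_in_LA cinner_commute[of \<eta> "w \<gamma>"] by (auto simp: w_def op_range_def)
      then show ?thesis
        using norm_add_square[of \<eta> "t *\<^sub>R w \<gamma>"] \<open>0 \<le> t\<close>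
        by (simp add: cinner_scaleR_right power_mult_distrib power2_eq_square)
    qed
    also have "\<dots> \<le> (norm \<eta>)\<^sup>2 + t * (norm \<eta>)\<^sup>2"
      using bound[of \<gamma>] \<open>0 \<le> t\<close> by (simp add: w_def mult_left_mono)
    also have "\<dots> = (norm \<eta>)\<^sup>2 * (1 + t)"
      by (simp add: algebra_simps)
    finally show ?thesis .
  qed
  moreover have "((\<lambda>\<gamma>. (norm (w \<beta> + t *\<^sub>R \<theta> (e \<beta> \<circ> e \<gamma>) \<eta>))\<^sup>2) \<longlongrightarrow> (norm (w \<beta> + t *\<^sub>R w \<beta>))\<^sup>2) N"
    unfolding w_def by (intro tendsto_intros theta_comp_e_tendsto e_in_LA)
  ultimately have "(norm (w \<beta> + t *\<^sub>R w \<beta>))\<^sup>2 \<le> (norm \<eta>)\<^sup>2 * (1 + t)"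
    by (intro tendsto_le[OF N_ne_bot tendsto_const]) auto
  moreover have "norm (w \<beta> + t *\<^sub>R w \<beta>) = (1 + t) * norm (w \<beta>)"
    using \<open>0 \<le> t\<close> by (simp add: scaleR_add_left[of 1 t, simplified, symmetric])
  ultimately have "(1 + t) * ((1 + t) * (norm (w \<beta>))\<^sup>2) \<le> (1 + t) * (norm \<eta>)\<^sup>2"
    by (simp add: power_mult_distrib power2_eq_square mult_ac)
  then show ?thesis
    using \<open>0 \<le> t\<close> by (simp add: w_def)
qed

lemma theta_vanishes_on_orthogonal:
  assumes orth: "\<And>v. v \<in> op_range L \<theta> \<Longrightarrow> cinner v \<eta> = 0" and "y \<in> L"
  shows "\<theta> y \<eta> = 0"
proof -
  have bound: "real n * (norm (\<theta> (e \<beta>) \<eta>))\<^sup>2 \<le> (norm \<eta>)\<^sup>2" for n \<beta>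
  proof (induction n arbitrary: \<beta>)
    case (Suc n)
    then show ?case
      using theta_e_orthogonal_step[OF orth _ Suc.IH] by (simp add: add.commute)
  qed simp
  have "\<theta> (e \<beta>) \<eta> = 0" for \<beta>
  proof (rule ccontr)
    assume "\<theta> (e \<beta>) \<eta> \<noteq> 0"
    then have pos: "0 < (norm (\<theta> (e \<beta>) \<eta>))\<^sup>2"
      by simp
    obtain n :: nat where "(norm \<eta>)\<^sup>2 / (norm (\<theta> (e \<beta>) \<eta>))\<^sup>2 < real n"
      using reals_Archimedean2 by blast
    then show False
      using bound[of n \<beta>] pos by (simp add: field_simps)
  qed
  then have "\<theta> (y \<circ> e \<beta>) \<eta> = 0" for \<beta>
    using \<open>y \<in> L\<close> e_in_LA by (simp add: cc_hom_comp[OF \<theta>] BH_zero[OF cc_hom_BH[OF \<theta>]])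
  then have "((\<lambda>\<beta>. \<theta> (y \<circ> e \<beta>) \<eta>) \<longlongrightarrow> 0) N"
    by simp
  then show ?thesis
    using tendsto_unique[OF N_ne_bot theta_comp_e_tendsto[OF \<open>y \<in> L\<close>]] by blast
qed

lemma theta_comp_e_convergent:
  assumes "a \<in> A"
  shows "\<xi> \<in> convergence_set (\<lambda>\<alpha>. \<theta> (a \<circ> e \<alpha>)) N"
proof -
  let ?C = "convergence_set (\<lambda>\<alpha>. \<theta> (a \<circ> e \<alpha>)) N"
  let ?W = "closure (complex_module.span (op_range L \<theta>))"
  have aeL: "a \<circ> e \<alpha> \<in> L" for \<alpha>
    using assms e_in_LA by (rule comp_in_LA)
  have BH: "\<theta> (a \<circ> e \<alpha>) \<in> BH" for \<alpha>
    using aeL by (rule cc_hom_BH[OF \<theta>])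
  have "closed ?C"
    using BH opnorm_theta_comp_e_le[OF assms] by (rule closed_convergence_set)
  have "complex_module.subspace ?C"
    using BH by (rule subspace_convergence_set)
  have "op_range L \<theta> \<subseteq> ?C"
  proof
    fix v assume "v \<in> op_range L \<theta>"
    then obtain y \<zeta> where "y \<in> L" "v = \<theta> y \<zeta>"
      by (auto simp: op_range_def)
    then have "\<theta> (a \<circ> e \<alpha>) v = \<theta> (a \<circ> e \<alpha> \<circ> y) \<zeta>" for \<alpha>
      by (simp add: cc_hom_comp[OF \<theta> aeL])
    then show "v \<in> ?C"
      using theta_comp_tendsto[OF assms \<open>y \<in> L\<close>] by (auto simp: convergence_set_def)
  qed
  then have "?W \<subseteq> ?C"
    using \<open>closed ?C\<close> \<open>complex_module.subspace ?C\<close>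
    by (intro closure_minimal complex_module.span_minimal)
  obtain k where "k \<in> ?W" and k: "\<And>v. v \<in> ?W \<Longrightarrow> cinner v (\<xi> - k) = 0"
    using orthogonal_decomposition[of ?W \<xi>] by (auto simp: complex_subspace_closure)
  have "\<theta> (a \<circ> e \<alpha>) (\<xi> - k) = 0" for \<alpha>
    using k complex_module.span_superset closure_subset aeL
    by (intro theta_vanishes_on_orthogonal) blast+
  then have "\<xi> - k \<in> ?C"
    by (auto simp: convergence_set_def)
  then have "k + (\<xi> - k) \<in> ?C"
    using \<open>?W \<subseteq> ?C\<close> \<open>k \<in> ?W\<close> \<open>complex_module.subspace ?C\<close> complex_module.subspace_add by blast
  then show ?thesis
    by simp
qed

definition extension :: "('a \<Rightarrow> 'a) \<Rightarrow> 'b \<Rightarrow> 'b" where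
  "extension a \<xi> = Lim N (\<lambda>\<alpha>. \<theta> (a \<circ> e \<alpha>) \<xi>)"

lemma extension_tendsto: "a \<in> A \<Longrightarrow> ((\<lambda>\<alpha>. \<theta> (a \<circ> e \<alpha>) \<xi>) \<longlongrightarrow> extension a \<xi>) N"
  using theta_comp_e_convergent[of a \<xi>] tendsto_Lim[OF N_ne_bot]
  by (auto simp: convergence_set_def extension_def)

lemma extension_eqI: "a \<in> A \<Longrightarrow> ((\<lambda>\<alpha>. \<theta> (a \<circ> e \<alpha>) \<xi>) \<longlongrightarrow> l) N \<Longrightarrow> extension a \<xi> = l"
  using tendsto_unique[OF N_ne_bot extension_tendsto] by blast

lemma extension_eq_theta: "y \<in> L \<Longrightarrow> extension y = \<theta> y"
  using LA_subset_A by (auto intro!: extension_eqI theta_comp_e_tendsto)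

lemma extension_op_range: "a \<in> A \<Longrightarrow> y \<in> L \<Longrightarrow> extension a (\<theta> y \<zeta>) = \<theta> (a \<circ> y) \<zeta>"
  using theta_comp_tendsto e_in_LA by (auto intro!: extension_eqI simp: cc_hom_comp[OF \<theta>] comp_in_LA)

lemma extension_in_BH:
  assumes "a \<in> A"
  shows "extension a \<in> BH"
proof (rule BHI)
  have BH: "\<theta> (a \<circ> e \<alpha>) \<in> BH" for \<alpha>
    using assms e_in_LA by (intro cc_hom_BH[OF \<theta>] comp_in_LA)
  show "extension a (x + y) = extension a x + extension a y" for x y
    using assms extension_tendsto[OF assms]
    by (intro extension_eqI) (auto simp: BH_add[OF BH] intro: tendsto_add)
  show "extension a (scaleC c x) = scaleC c (extension a x)" for c x
    using assms bounded_linear.tendsto[OF bounded_linear_scaleC extension_tendsto[OF assms]]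
    by (intro extension_eqI) (auto simp: BH_scaleC[OF BH])
  show "norm (extension a x) \<le> opnorm a * norm x" for x
  proof (rule tendsto_le[OF N_ne_bot tendsto_const tendsto_norm[OF extension_tendsto[OF assms]]])
    have "norm (\<theta> (a \<circ> e \<alpha>) x) \<le> opnorm a * norm x" for \<alpha>
      using opnorm_apply_le[OF BH, of \<alpha> x] opnorm_theta_comp_e_le[OF assms, of \<alpha>]
      by (meson mult_right_mono norm_ge_zero order_trans)
    then show "\<forall>\<^sub>F \<alpha> in N. norm (\<theta> (a \<circ> e \<alpha>) x) \<le> opnorm a * norm x"
      by simp
  qed
qed

lemma extension_add:
  assumes "a \<in> A" "b \<in> A"
  shows "extension (\<lambda>x. a x + b x) = (\<lambda>y. extension a y + extension b y)"
proof
  fix \<xi>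
  have "\<theta> ((\<lambda>x. a x + b x) \<circ> e \<alpha>) \<xi> = \<theta> (a \<circ> e \<alpha>) \<xi> + \<theta> (b \<circ> e \<alpha>) \<xi>" for \<alpha>
    using cc_hom_add[OF \<theta> comp_in_LA[OF assms(1) e_in_LA] comp_in_LA[OF assms(2) e_in_LA]]
    by (simp add: o_def)
  then show "extension (\<lambda>x. a x + b x) \<xi> = extension a \<xi> + extension b \<xi>"
    using assms by (intro extension_eqI add_in_A) (auto intro: tendsto_add extension_tendsto)
qed

lemma extension_scaleC:
  assumes "a \<in> A"
  shows "extension (\<lambda>x. scaleC c (a x)) = (\<lambda>y. scaleC c (extension a y))"
proof
  fix \<xi>
  have "\<theta> ((\<lambda>x. scaleC c (a x)) \<circ> e \<alpha>) \<xi> = scaleC c (\<theta> (a \<circ> e \<alpha>) \<xi>)" for \<alpha>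
    using cc_hom_scaleC[OF \<theta> comp_in_LA[OF assms e_in_LA]] by (simp add: o_def)
  then show "extension (\<lambda>x. scaleC c (a x)) \<xi> = scaleC c (extension a \<xi>)"
    using assms bounded_linear.tendsto[OF bounded_linear_scaleC extension_tendsto[OF assms]]
    by (intro extension_eqI scaleC_in_A) auto
qed

lemma extension_comp:
  assumes "a \<in> A" "b \<in> A"
  shows "extension (a \<circ> b) = extension a \<circ> extension b"
proof
  fix \<xi>
  have "((\<lambda>\<beta>. extension a (\<theta> (b \<circ> e \<beta>) \<xi>)) \<longlongrightarrow> extension a (extension b \<xi>)) N"
    using bounded_linear_BH[OF extension_in_BH[OF assms(1)]] extension_tendsto[OF assms(2)]
    by (rule bounded_linear.tendsto)
  moreover have "extension a (\<theta> (b \<circ> e \<beta>) \<xi>) = \<theta> ((a \<circ> b) \<circ> e \<beta>) \<xi>" for \<beta>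
    using extension_op_range[OF assms(1) comp_in_LA[OF assms(2) e_in_LA]] by (simp add: comp_assoc)
  ultimately have "((\<lambda>\<beta>. \<theta> ((a \<circ> b) \<circ> e \<beta>) \<xi>) \<longlongrightarrow> extension a (extension b \<xi>)) N"
    by simp
  then show "extension (a \<circ> b) \<xi> = (extension a \<circ> extension b) \<xi>"
    using extension_eqI[OF comp_in_A[OF assms]] by simp
qed

lemma extension_matnorm:
  assumes "1 \<le> n" and a: "\<forall>i<n. \<forall>j<n. a i j \<in> A"
  shows "matnorm n (\<lambda>i j. extension (a i j)) \<le> matnorm n a"
proof (rule matnorm_least)
  fix x :: "nat \<Rightarrow> 'b" assume x: "(\<Sum>j<n. (norm (x j))\<^sup>2) \<le> 1"
  have "((\<lambda>\<alpha>. sqrt (\<Sum>i<n. (norm (\<Sum>j<n. \<theta> (a i j \<circ> e \<alpha>) (x j)))\<^sup>2))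
      \<longlongrightarrow> sqrt (\<Sum>i<n. (norm (\<Sum>j<n. extension (a i j) (x j)))\<^sup>2)) N"
    using a by (intro tendsto_real_sqrt tendsto_sum tendsto_power tendsto_norm extension_tendsto) auto
  moreover have "sqrt (\<Sum>i<n. (norm (\<Sum>j<n. \<theta> (a i j \<circ> e \<alpha>) (x j)))\<^sup>2) \<le> matnorm n a" for \<alpha>
  proof -
    have aeL: "\<forall>i<n. \<forall>j<n. a i j \<circ> e \<alpha> \<in> L"
      using a e_in_LA by (auto intro: comp_in_LA)
    then have "sqrt (\<Sum>i<n. (norm (\<Sum>j<n. \<theta> (a i j \<circ> e \<alpha>) (x j)))\<^sup>2)
        \<le> matnorm n (\<lambda>i j. \<theta> (a i j \<circ> e \<alpha>))"
      using x by (intro matnorm_upper) (auto intro: cc_hom_BH[OF \<theta>])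
    also have "\<dots> \<le> matnorm n (\<lambda>i j. a i j \<circ> e \<alpha>)"
      using aeL \<open>1 \<le> n\<close> by (rule cc_hom_matnorm[OF \<theta>, rotated])
    also have "\<dots> \<le> matnorm n a"
      using a A_subset_BH by (intro matnorm_comp_contraction e_in_BH opnorm_e_le_1) auto
    finally show ?thesis .
  qed
  ultimately show "sqrt (\<Sum>i<n. (norm (\<Sum>j<n. extension (a i j) (x j)))\<^sup>2) \<le> matnorm n a"
    by (intro tendsto_le[OF N_ne_bot tendsto_const]) auto
qed

theorem cc_hom_extension: "cc_hom A extension"
  unfolding cc_hom_def
  by (simp add: extension_in_BH extension_add extension_scaleC extension_comp extension_matnorm)

theorem nondegenerate_extension:
  assumes "nondegenerate L \<theta>"
  shows "nondegenerate A extension"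
proof -
  have "op_range L \<theta> \<subseteq> op_range A extension"
    using LA_subset_A by (force simp: op_range_def extension_eq_theta)
  then have "closure (complex_module.span (op_range L \<theta>))
      \<subseteq> closure (complex_module.span (op_range A extension))"
    by (intro closure_mono complex_module.span_mono)
  with assms show ?thesis
    by (auto simp: nondegenerate_iff_op_range)
qed

theorem extension_unique:
  assumes nd: "nondegenerate L \<theta>" and \<pi>: "cc_hom A \<pi>" and agree: "\<And>x. x \<in> L \<Longrightarrow> \<pi> x = \<theta> x"
    and "a \<in> A"
  shows "\<pi> a = extension a"
proof
  fix \<xi>
  show "\<pi> a \<xi> = extension a \<xi>"
  proof (rule BH_eq_on_closure_span[of "\<pi> a" "extension a" "op_range L \<theta>"])
    show "\<pi> a \<in> BH" "extension a \<in> BH"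
      using \<open>a \<in> A\<close> by (simp_all add: cc_hom_BH[OF \<pi>] extension_in_BH)
    show "\<xi> \<in> closure (complex_module.span (op_range L \<theta>))"
      using nd by (simp add: nondegenerate_iff_op_range)
    fix z assume "z \<in> op_range L \<theta>"
    then obtain y \<zeta> where "y \<in> L" "z = \<theta> y \<zeta>"
      by (auto simp: op_range_def)
    then have "\<pi> a z = \<pi> (a \<circ> y) \<zeta>"
      using \<open>a \<in> A\<close> LA_subset_A agree by (auto simp: cc_hom_comp[OF \<pi>])
    also have "\<dots> = extension a z"
      using \<open>a \<in> A\<close> \<open>y \<in> L\<close> \<open>z = \<theta> y \<zeta>\<close> agree by (simp add: comp_in_LA extension_op_range)
    finally show "\<pi> a z = extension a z" .
  qed
qed

end

end

theorem proposition2p12: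
  fixes A :: "('a::chilbert \<Rightarrow> 'a) set"
    and le :: "'i \<Rightarrow> 'i \<Rightarrow> bool"
    and e :: "'i \<Rightarrow> ('a \<Rightarrow> 'a)"
  assumes "op_algebra A"
    and "property_L A le e"
  shows "(\<forall>\<pi> :: ('a \<Rightarrow> 'a) \<Rightarrow> ('b::chilbert \<Rightarrow> 'b).
            cc_hom A \<pi> \<longrightarrow> cc_hom (LA A le e) \<pi>
              \<and> (nondegenerate A \<pi> \<longrightarrow> nondegenerate (LA A le e) \<pi>))
     \<and> (\<forall>\<theta> :: ('a \<Rightarrow> 'a) \<Rightarrow> ('b \<Rightarrow> 'b).
            cc_hom (LA A le e) \<theta> \<longrightarrow>
              (\<exists>\<pi>. cc_hom A \<pi> \<and> (\<forall>x\<in>LA A le e. \<pi> x = \<theta> x))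
              \<and> (nondegenerate (LA A le e) \<theta> \<longrightarrow>
                   (\<exists>\<pi>. cc_hom A \<pi> \<and> (\<forall>x\<in>LA A le e. \<pi> x = \<theta> x) \<and> nondegenerate A \<pi>
                        \<and> (\<forall>\<pi>'. cc_hom A \<pi>' \<and> (\<forall>x\<in>LA A le e. \<pi>' x = \<theta> x)
                                 \<longrightarrow> (\<forall>a\<in>A. \<pi>' a = \<pi> a)))))
     \<and> (\<forall>\<pi> :: ('a \<Rightarrow> 'a) \<Rightarrow> ('b \<Rightarrow> 'b).
            cc_hom A \<pi> \<longrightarrow>
              {T \<in> BH. \<forall>a\<in>A. T \<circ> \<pi> a \<in> \<pi> ` A}
              = {T \<in> BH. \<forall>a\<in>LA A le e. T \<circ> \<pi> a \<in> \<pi> ` LA A le e})"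
proof -
  interpret property_L_algebra A le e
    using assms by unfold_locales
  show ?thesis
  proof (intro conjI allI impI)
    fix \<pi> :: "('a \<Rightarrow> 'a) \<Rightarrow> ('b \<Rightarrow> 'b)"
    assume \<pi>: "cc_hom A \<pi>"
    then show "cc_hom L \<pi>"
      by (rule cc_hom_restrict)
    show "nondegenerate A \<pi> \<Longrightarrow> nondegenerate L \<pi>"
      using \<pi> by (rule nondegenerate_restrict)
    show "{T \<in> BH. \<forall>a\<in>A. T \<circ> \<pi> a \<in> \<pi> ` A} = {T \<in> BH. \<forall>a\<in>L. T \<circ> \<pi> a \<in> \<pi> ` L}"
      using \<pi> by (rule left_multipliers_eq)
  next
    fix \<theta> :: "('a \<Rightarrow> 'a) \<Rightarrow> ('b \<Rightarrow> 'b)"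
    assume \<theta>: "cc_hom L \<theta>"
    then have extends: "cc_hom A (extension \<theta>)" "\<forall>x\<in>L. extension \<theta> x = \<theta> x"
      by (simp_all add: cc_hom_extension extension_eq_theta)
    then show "\<exists>\<pi>. cc_hom A \<pi> \<and> (\<forall>x\<in>L. \<pi> x = \<theta> x)"
      by blast
    assume "nondegenerate L \<theta>"
    then show "\<exists>\<pi>. cc_hom A \<pi> \<and> (\<forall>x\<in>L. \<pi> x = \<theta> x) \<and> nondegenerate A \<pi>
        \<and> (\<forall>\<pi>'. cc_hom A \<pi>' \<and> (\<forall>x\<in>L. \<pi>' x = \<theta> x) \<longrightarrow> (\<forall>a\<in>A. \<pi>' a = \<pi> a))"
      using extends nondegenerate_extension[OF \<theta>] extension_unique[OF \<theta>]
      by (intro exI[of _ "extension \<theta>"]) blast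
  qed
qed

end
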